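(* Let $A_G \in \mathbb{R}^{n_G\times n_G}$, $B_G \in \mathbb{R}^{n_G\times n_u}$ and consider the discrete-time plant $x(k+1) = A_G x(k) + B_G u(k)$ in feedback with the neural-network controller $u(k)=\pi(x(k))$ defined by $w^0(k)=x(k)$, $w^i(k)=\phi^i(W^i w^{i-1}(k))$ for $i=1,\dots,\ell$, $u(k)=W^{\ell+1}w^\ell(k)$, where $W^i\in\mathbb{R}^{n_i\times n_{i-1}}$ ($n_0=n_G$, $n_{\ell+1}=n_u$), and $\phi^i$ applies a scalar function $\varphi:\mathbb{R}\to\mathbb{R}$ with $\varphi(0)=0$ elementwise. Let $X=\{x\in\mathbb{R}^{n_G}: -h\le Hx\le h\}$ with $H\in\mathbb{R}^{n_X\times n_G}$, $h\in\mathbb{R}^{n_X}$, $h\ge 0$, and denote by $H_i^\top$ the $i$-th row of $H$ (so $H_i\in\mathbb{R}^{n_G}$). Set $n_\phi=n_1+\dots+n_\ell$, $v^i = W^i w^{i-1}$, $v_\phi=(v^1,\dots,v^\ell)$, $w_\phi=(w^1,\dots,w^\ell)\in\mathbb{R}^{n_\phi}$, and let $N=\begin{bmatrix} N_{ux} & N_{uw}\\ N_{vx} & N_{vw}\end{bmatrix}$ be the matrix with $\begin{bmatrix}u\\ v_\phi\end{bmatrix}=N\begin{bmatrix}x\\ w_\phi\end{bmatrix}$, i.e. $N_{ux}=0$, $N_{uw}=\begin{bmatrix}0&\cdots&0&W^{\ell+1}\end{bmatrix}$, $N_{vx}=\begin{bmatrix}W^1\\0\\\vdots\\0\end{bmatrix}$,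 and $N_{vw}$ is the block matrix whose only nonzero blocks are $W^2,\dots,W^\ell$ on the first block subdiagonal (block row $i$, block column $i-1$ equals $W^i$ for $i=2,\dots,\ell$). Let $\underline v,\bar v\in\mathbb{R}^{n_\phi}$ with $\underline v\le\bar v$ be such that $v_\phi\in[\underline v,\bar v]$ whenever $x\in X$, and let $\alpha_\phi,\beta_\phi\in\mathbb{R}^{n_\phi}$ with $\alpha_\phi\le\beta_\phi$ be such that for each $i=1,\dots,n_\phi$, $(\varphi(\nu)-\alpha_{\phi,i}\nu)(\beta_{\phi,i}\nu-\varphi(\nu))\ge 0$ for all $\nu\in[\underline v_i,\bar v_i]$. Put $A_\phi=\mathrm{diag}(\alpha_\phi)$, $B_\phi=\mathrm{diag}(\beta_\phi)$, $C_1=N_{uw}\frac{B_\phi-A_\phi}{2}$, $C_2=N_{uw}\frac{A_\phi+B_\phi}{2}$, $C_3=N_{vw}\frac{B_\phi-A_\phi}{2}$, $C_4=N_{vw}\frac{A_\phi+B_\phi}{2}$, and $$\tilde N=\begin{bmatrix}\tilde N_{ux}&\tilde N_{uz}\\ \tilde N_{vx}&\tilde N_{vz}\end{bmatrix}=\begin{bmatrix} N_{ux}+C_2(I-C_4)^{-1}N_{vx} & C_1+C_2(I-C_4)^{-1}C_3\\ (I-C_4)^{-1}N_{vx} & (I-C_4)^{-1}C_3\end{bmatrix},$$ with $\tilde R_V=\begin{bmatrix} I_{n_G} & 0\\ \tilde N_{ux}&\tilde N_{uz}\end{bmatrix}$ and $\tilde R_\phi=\begin{bmatrix}\tilde N_{vx}&\tilde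 N_{vz}\\ 0 & I_{n_\phi}\end{bmatrix}$. Suppose there exist $P\in\mathbb{S}^{n_G}_{++}$ and $\lambda\in\mathbb{R}^{n_\phi}$ with $\lambda\ge 0$ such that, with $\Lambda=\mathrm{diag}(\lambda)$, $$\tilde R_V^\top\begin{bmatrix}A_G^\top PA_G-P & A_G^\top PB_G\\ B_G^\top PA_G & B_G^\top PB_G\end{bmatrix}\tilde R_V+\tilde R_\phi^\top\begin{bmatrix}\Lambda&0\\0&-\Lambda\end{bmatrix}\tilde R_\phi<0$$ and $\begin{bmatrix} h_i^2 & H_i^\top\\ H_i & P\end{bmatrix}\ge 0$ for $i=1,\dots,n_X$. Then (i) the closed-loop system is locally asymptotically stable around the equilibrium $x_*=0$, and (ii) the ellipsoid $\mathcal{E}(P)=\{x: x^\top Px\le 1\}$ is contained in the region of attraction $\mathcal{R}=\{x_0\in X: \lim_{k\to\infty}\chi(k;x_0)=0\}$, where $\chi(k;x_0)$ is the closed-loop solution at time $k$ from $x(0)=x_0$.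
   Context: Inequalities between vectors are elementwise; $\mathbb{S}^n_{++}$ denotes symmetric positive definite $n\times n$ matrices; matrix inequalities $<0$, $\ge 0$ are in the sense of negative definiteness/positive semidefiniteness. The matrix $I-C_4$ is invertible because $N_{vw}$ is strictly block lower triangular. All biases of the network are zero so that $x_*=0$, $u_*=0$ is an equilibrium. *)

theory Defs
  imports "Jordan_Normal_Form.Gauss_Jordan_Elimination"
begin

text \<open>Vectors and matrices are Jordan_Normal_Form values with explicit dimensions,
  because the number of layers and the layer widths vary.\<close>

definition diagv :: "real vec \<Rightarrow> real mat" where
  "diagv a = mat (dim_vec a) (dim_vec a) (\<lambda>(i,j). if i = j then a $ i else 0)"

definition minv :: "real mat \<Rightarrow> real mat" where
  "minv M = the (mat_inverse M)"

definition vnorm :: "real vec \<Rightarrow> real" where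
  "vnorm x = sqrt (x \<bullet> x)"

definition pos_def :: "nat \<Rightarrow> real mat \<Rightarrow> bool" where
  "pos_def n M \<longleftrightarrow> M \<in> carrier_mat n n \<and> M\<^sup>T = M \<and>
     (\<forall>x\<in>carrier_vec n. x \<noteq> 0\<^sub>v n \<longrightarrow> x \<bullet> (M *\<^sub>v x) > 0)"

definition neg_def :: "nat \<Rightarrow> real mat \<Rightarrow> bool" where
  "neg_def n M \<longleftrightarrow> M \<in> carrier_mat n n \<and>
     (\<forall>x\<in>carrier_vec n. x \<noteq> 0\<^sub>v n \<longrightarrow> x \<bullet> (M *\<^sub>v x) < 0)"

definition psd :: "nat \<Rightarrow> real mat \<Rightarrow> bool" where
  "psd n M \<longleftrightarrow> M \<in> carrier_mat n n \<and>
     (\<forall>x\<in>carrier_vec n. x \<bullet> (M *\<^sub>v x) \<ge> 0)"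

fun layer_w :: "(real \<Rightarrow> real) \<Rightarrow> (nat \<Rightarrow> real mat) \<Rightarrow> real vec \<Rightarrow> nat \<Rightarrow> real vec" where
  "layer_w \<phi> W x 0 = x"
| "layer_w \<phi> W x (Suc i) = map_vec \<phi> (W (Suc i) *\<^sub>v layer_w \<phi> W x i)"

definition layer_v :: "(real \<Rightarrow> real) \<Rightarrow> (nat \<Rightarrow> real mat) \<Rightarrow> real vec \<Rightarrow> nat \<Rightarrow> real vec" where
  "layer_v \<phi> W x i = W i *\<^sub>v layer_w \<phi> W x (i - 1)"

fun stackv :: "(nat \<Rightarrow> real vec) \<Rightarrow> nat \<Rightarrow> real vec" where
  "stackv v 0 = vec 0 (\<lambda>_. 0)"
| "stackv v (Suc i) = stackv v i @\<^sub>v v (Suc i)"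

definition nn_ctrl :: "(real \<Rightarrow> real) \<Rightarrow> (nat \<Rightarrow> real mat) \<Rightarrow> nat \<Rightarrow> real vec \<Rightarrow> real vec" where
  "nn_ctrl \<phi> W l x = W (Suc l) *\<^sub>v layer_w \<phi> W x l"

fun traj :: "real mat \<Rightarrow> real mat \<Rightarrow> (real vec \<Rightarrow> real vec) \<Rightarrow> real vec \<Rightarrow> nat \<Rightarrow> real vec" where
  "traj AG BG \<pi> x0 0 = x0"
| "traj AG BG \<pi> x0 (Suc k) = AG *\<^sub>v traj AG BG \<pi> x0 k + BG *\<^sub>v \<pi> (traj AG BG \<pi> x0 k)"

text \<open>Offset of layer i in the stacked vector: n_1 + ... + n_{i-1}.\<close>
definition off :: "(nat \<Rightarrow> nat) \<Rightarrow> nat \<Rightarrow> nat" where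
  "off n i = (\<Sum>j\<in>{1..<i}. n j)"

text \<open>Block row [0 ... 0 W^i] of size n_i x (n_1+...+n_{i-1}), W^i in the last block column.\<close>
definition rowblk :: "(nat \<Rightarrow> nat) \<Rightarrow> (nat \<Rightarrow> real mat) \<Rightarrow> nat \<Rightarrow> real mat" where
  "rowblk n W i = mat (n i) (off n i)
     (\<lambda>(r,c). if off n (i - 1) \<le> c then W i $$ (r, c - off n (i - 1)) else 0)"

definition Nuw :: "(nat \<Rightarrow> nat) \<Rightarrow> (nat \<Rightarrow> real mat) \<Rightarrow> nat \<Rightarrow> real mat" where
  "Nuw n W l = rowblk n W (Suc l)"

definition Nvx :: "(nat \<Rightarrow> nat) \<Rightarrow> (nat \<Rightarrow> real mat) \<Rightarrow> nat \<Rightarrow> real mat" where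
  "Nvx n W l = mat (off n (Suc l)) (n 0)
     (\<lambda>(r,c). if r < n 1 then W 1 $$ (r, c) else 0)"

text \<open>N_vw: block strictly lower triangular, W^i in block row i, block column i-1 (i = 2..l).\<close>
fun Nvw :: "(nat \<Rightarrow> nat) \<Rightarrow> (nat \<Rightarrow> real mat) \<Rightarrow> nat \<Rightarrow> real mat" where
  "Nvw n W 0 = 0\<^sub>m 0 0"
| "Nvw n W (Suc 0) = 0\<^sub>m (n 1) (n 1)"
| "Nvw n W (Suc (Suc i)) = four_block_mat (Nvw n W (Suc i)) (0\<^sub>m (off n (Suc (Suc i))) (n (Suc (Suc i))))
       (rowblk n W (Suc (Suc i))) (0\<^sub>m (n (Suc (Suc i))) (n (Suc (Suc i))))"

definition Nux :: "(nat \<Rightarrow> nat) \<Rightarrow> nat \<Rightarrow> real mat" where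
  "Nux n l = 0\<^sub>m (n (Suc l)) (n 0)"

definition C1 where "C1 n W l \<alpha> \<beta> = Nuw n W l * ((1/2) \<cdot>\<^sub>m (diagv \<beta> - diagv \<alpha>))"
definition C2 where "C2 n W l \<alpha> \<beta> = Nuw n W l * ((1/2) \<cdot>\<^sub>m (diagv \<alpha> + diagv \<beta>))"
definition C3 where "C3 n W l \<alpha> \<beta> = Nvw n W l * ((1/2) \<cdot>\<^sub>m (diagv \<beta> - diagv \<alpha>))"
definition C4 where "C4 n W l \<alpha> \<beta> = Nvw n W l * ((1/2) \<cdot>\<^sub>m (diagv \<alpha> + diagv \<beta>))"

definition IC4inv where
  "IC4inv n W l \<alpha> \<beta> = minv (1\<^sub>m (off n (Suc l)) - C4 n W l \<alpha> \<beta>)"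

definition tNux where "tNux n W l \<alpha> \<beta> = Nux n l + C2 n W l \<alpha> \<beta> * IC4inv n W l \<alpha> \<beta> * Nvx n W l"
definition tNuz where "tNuz n W l \<alpha> \<beta> = C1 n W l \<alpha> \<beta> + C2 n W l \<alpha> \<beta> * IC4inv n W l \<alpha> \<beta> * C3 n W l \<alpha> \<beta>"
definition tNvx where "tNvx n W l \<alpha> \<beta> = IC4inv n W l \<alpha> \<beta> * Nvx n W l"
definition tNvz where "tNvz n W l \<alpha> \<beta> = IC4inv n W l \<alpha> \<beta> * C3 n W l \<alpha> \<beta>"

definition tRV where
  "tRV n W l \<alpha> \<beta> = four_block_mat (1\<^sub>m (n 0)) (0\<^sub>m (n 0) (off n (Suc l))) (tNux n W l \<alpha> \<beta>) (tNuz n W l \<alpha> \<beta>)"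
definition tRphi where
  "tRphi n W l \<alpha> \<beta> = four_block_mat (tNvx n W l \<alpha> \<beta>) (tNvz n W l \<alpha> \<beta>)
      (0\<^sub>m (off n (Suc l)) (n 0)) (1\<^sub>m (off n (Suc l)))"

definition lmi_lhs :: "real mat \<Rightarrow> real mat \<Rightarrow> real mat \<Rightarrow> (nat \<Rightarrow> nat) \<Rightarrow> (nat \<Rightarrow> real mat) \<Rightarrow> nat
   \<Rightarrow> real vec \<Rightarrow> real vec \<Rightarrow> real vec \<Rightarrow> real mat" where
  "lmi_lhs AG BG P n W l \<alpha> \<beta> lam =
     (tRV n W l \<alpha> \<beta>)\<^sup>T * four_block_mat (AG\<^sup>T * P * AG - P) (AG\<^sup>T * P * BG) (BG\<^sup>T * P * AG) (BG\<^sup>T * P * BG)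
       * tRV n W l \<alpha> \<beta>
   + (tRphi n W l \<alpha> \<beta>)\<^sup>T * four_block_mat (diagv lam) (0\<^sub>m (dim_vec lam) (dim_vec lam))
        (0\<^sub>m (dim_vec lam) (dim_vec lam)) (- diagv lam) * tRphi n W l \<alpha> \<beta>"

definition polyX :: "nat \<Rightarrow> real mat \<Rightarrow> real vec \<Rightarrow> real vec set" where
  "polyX nG H h = {x \<in> carrier_vec nG. \<forall>i<dim_vec h. - (h $ i) \<le> (H *\<^sub>v x) $ i \<and> (H *\<^sub>v x) $ i \<le> h $ i}"

definition loc_asym_stable :: "nat \<Rightarrow> real mat \<Rightarrow> real mat \<Rightarrow> (real vec \<Rightarrow> real vec) \<Rightarrow> bool" where
  "loc_asym_stable nG AG BG \<pi> \<longleftrightarrow>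
     (\<forall>\<epsilon>>0. \<exists>\<delta>>0. \<forall>x0\<in>carrier_vec nG. vnorm x0 < \<delta> \<longrightarrow> (\<forall>k. vnorm (traj AG BG \<pi> x0 k) < \<epsilon>)) \<and>
     (\<exists>\<delta>>0. \<forall>x0\<in>carrier_vec nG. vnorm x0 < \<delta> \<longrightarrow> (\<lambda>k. vnorm (traj AG BG \<pi> x0 k)) \<longlonglongrightarrow> 0)"

definition roa :: "nat \<Rightarrow> real mat \<Rightarrow> real mat \<Rightarrow> (real vec \<Rightarrow> real vec) \<Rightarrow> real mat \<Rightarrow> real vec \<Rightarrow> real vec set" where
  "roa nG AG BG \<pi> H h = {x0 \<in> polyX nG H h. (\<lambda>k. vnorm (traj AG BG \<pi> x0 k)) \<longlonglongrightarrow> 0}"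

definition ellipsoid :: "nat \<Rightarrow> real mat \<Rightarrow> real vec set" where
  "ellipsoid nG P = {x \<in> carrier_vec nG. x \<bullet> (P *\<^sub>v x) \<le> 1}"

end

theory Submission
  imports Defs "Jordan_Normal_Form.Determinant"
begin

(* The network is a feedback interconnection of the linear map (x, w) \<mapsto> (u, v) given by N with
  the componentwise nonlinearity w = \<phi>(v). For x in X the local sector bounds let us write
  w = (A + B)/2 v + (B - A)/2 z with z\<^sub>i\<^sup>2 \<le> v\<^sub>i\<^sup>2, and since N_vw is strictly lower triangular, v and u
  can be solved for as linear functions of (x, z); the matrices R_V and R_\<phi> are exactly these
  maps. Evaluating the first LMI at (x, z) therefore gives
  V(x\<^sup>+) - V(x) + \<Sum> \<lambda>\<^sub>i (v\<^sub>i\<^sup>2 - z\<^sub>i\<^sup>2) \<le> -e |(x, z)|\<^sup>2 with V(x) = x\<^sup>T P x, hence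
  V(x\<^sup>+) \<le> V(x) - e |x|\<^sup>2 on X. The second LMI says that the ellipsoid V \<le> 1 lies in X, so it is
  forward invariant; along trajectories starting in it, e \<Sum>\<^sub>k |x(k)|\<^sup>2 \<le> V(x(0)), which gives
  both attractivity and, with V(x) \<le> C |x|\<^sup>2, Lyapunov stability.
*)

section \<open>Uniform bounds for quadratic forms\<close>

definition quad_form :: "nat \<Rightarrow> (nat \<Rightarrow> nat \<Rightarrow> real) \<Rightarrow> (nat \<Rightarrow> real) \<Rightarrow> real" where
  "quad_form N a y = (\<Sum>i<N. \<Sum>j<N. a i j * y i * y j)"

lemma quad_form_cong: "(\<And>i. i < N \<Longrightarrow> y i = y' i) \<Longrightarrow> quad_form N a y = quad_form N a y'"
  unfolding quad_form_def by (intro sum.cong) auto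

lemma quad_form_Suc:
  "quad_form (Suc N) a y =
     quad_form N a y + y N * (\<Sum>i<N. (a i N + a N i) * y i) + a N N * (y N)\<^sup>2"
  unfolding quad_form_def
  by (simp add: sum.distrib sum_distrib_left sum_distrib_right algebra_simps power2_eq_square)

lemma quad_form_rank_one: "quad_form N (\<lambda>i j. b i * b j) y = (\<Sum>i<N. b i * y i)\<^sup>2"
  unfolding quad_form_def power2_eq_square sum_product by (intro sum.cong) (auto simp: algebra_simps)

lemma quad_form_le_abs_sum: "quad_form N a y \<le> (\<Sum>i<N. \<Sum>j<N. \<bar>a i j\<bar>) * (\<Sum>i<N. (y i)\<^sup>2)"
proof -
  have "a i j * y i * y j \<le> \<bar>a i j\<bar> * (\<Sum>i<N. (y i)\<^sup>2)" if "i < N" "j < N" for i j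
  proof -
    have "(y i)\<^sup>2 \<le> (\<Sum>i<N. (y i)\<^sup>2)" "(y j)\<^sup>2 \<le> (\<Sum>i<N. (y i)\<^sup>2)"
      using that by (auto intro: member_le_sum)
    moreover have "0 \<le> (\<bar>y i\<bar> - \<bar>y j\<bar>)\<^sup>2" by simp
    then have "2 * \<bar>y i * y j\<bar> \<le> (y i)\<^sup>2 + (y j)\<^sup>2"
      by (simp add: power2_eq_square abs_mult algebra_simps)
    ultimately have yy: "\<bar>y i * y j\<bar> \<le> (\<Sum>i<N. (y i)\<^sup>2)" by linarith
    have "a i j * y i * y j \<le> \<bar>a i j * y i * y j\<bar>" by (rule abs_ge_self)
    also have "\<dots> = \<bar>a i j\<bar> * \<bar>y i * y j\<bar>" by (simp add: abs_mult)
    also have "\<dots> \<le> \<bar>a i j\<bar> * (\<Sum>i<N. (y i)\<^sup>2)" using yy by (simp add: mult_left_mono)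
    finally show ?thesis .
  qed
  then have "quad_form N a y \<le> (\<Sum>i<N. \<Sum>j<N. \<bar>a i j\<bar> * (\<Sum>i<N. (y i)\<^sup>2))"
    unfolding quad_form_def by (intro sum_mono) auto
  then show ?thesis by (simp add: sum_distrib_right)
qed

lemma completed_square_lower_bound:
  fixes e c K S B t Q :: real
  assumes e: "0 < e" and c: "0 < c" and K: "0 \<le> K" and S: "0 \<le> S"
    and B: "B\<^sup>2 \<le> K * S" and Q: "e * S + c * (t + B / (2 * c))\<^sup>2 \<le> Q"
  shows "min (e / (1 + K / (2 * c\<^sup>2))) (c / 2) * (S + t\<^sup>2) \<le> Q"
proof -
  define s where "s = t + B / (2 * c)"
  define K' where "K' = K / (2 * c\<^sup>2)"
  define m where "m = min (e / (1 + K')) (c / 2)"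
  have K': "0 \<le> K'" unfolding K'_def using K by simp
  have "(s - B / (2 * c))\<^sup>2 \<le> 2 * s\<^sup>2 + 2 * (B / (2 * c))\<^sup>2"
    using sum_squares_bound[of s "- (B / (2 * c))"] by (simp add: power2_eq_square algebra_simps)
  then have "t\<^sup>2 \<le> 2 * s\<^sup>2 + 2 * (B / (2 * c))\<^sup>2" unfolding s_def by simp
  moreover have "2 * (B / (2 * c))\<^sup>2 \<le> K' * S"
    using B c unfolding K'_def by (simp add: power_divide power_mult_distrib divide_right_mono)
  ultimately have t: "t\<^sup>2 \<le> 2 * s\<^sup>2 + K' * S" by linarith
  have m: "0 \<le> m" using e c K' unfolding m_def by simp
  have "m \<le> e / (1 + K')" unfolding m_def by simp
  then have "m * (1 + K') \<le> e" using K' by (simp add: pos_le_divide_eq)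
  then have "m * (1 + K') * S \<le> e * S" using S by (rule mult_right_mono)
  moreover have "2 * m * s\<^sup>2 \<le> c * s\<^sup>2" unfolding m_def by (intro mult_right_mono) auto
  moreover have "m * t\<^sup>2 \<le> m * (2 * s\<^sup>2 + K' * S)" using t m by (rule mult_left_mono)
  ultimately have "m * (S + t\<^sup>2) \<le> e * S + c * s\<^sup>2" by (simp add: algebra_simps)
  then show ?thesis using Q unfolding m_def K'_def s_def by linarith
qed

text \<open>Induction on the dimension: completing the square in the last variable leaves the
  Schur complement, again a positive definite form in one variable less.\<close>
lemma quad_form_pos_imp_coercive:
  assumes "\<And>y. (\<exists>i<N. y i \<noteq> 0) \<Longrightarrow> quad_form N a y > 0"
  shows "\<exists>e>0. \<forall>y. e * (\<Sum>i<N. (y i)\<^sup>2) \<le> quad_form N a y"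
  using assms
proof (induction N arbitrary: a)
  case 0
  show ?case by (intro exI[of _ 1]) (simp add: quad_form_def)
next
  case (Suc N)
  define c where "c = a N N"
  define b where "b i = a i N + a N i" for i
  define B where "B y = (\<Sum>i<N. b i * y i)" for y
  define a' where "a' i j = a i j - b i * b j / (4 * c)" for i j
  have c: "c > 0"
    using Suc.prems[of "\<lambda>i. if i = N then 1 else 0"]
    by (simp add: quad_form_Suc quad_form_def c_def)
  have a': "quad_form N a' y = quad_form N a y - (B y)\<^sup>2 / (4 * c)" for y
    unfolding a'_def B_def quad_form_rank_one[symmetric] quad_form_def
    by (simp add: sum_subtractf sum_divide_distrib algebra_simps)
  have square: "quad_form (Suc N) a y = quad_form N a' y + c * (y N + B y / (2 * c))\<^sup>2" for y
    unfolding quad_form_Suc a' using c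
    by (simp add: B_def b_def c_def field_simps power2_eq_square)
  have "quad_form N a' y > 0" if "\<exists>i<N. y i \<noteq> 0" for y
  proof -
    define y' where "y' = y(N := - B y / (2 * c))"
    have "B y' = B y" "quad_form N a' y' = quad_form N a' y"
      unfolding B_def y'_def by (auto intro!: sum.cong quad_form_cong)
    moreover have "quad_form (Suc N) a y' > 0"
      using Suc.prems that unfolding y'_def by (metis fun_upd_other less_SucI less_irrefl)
    ultimately show ?thesis using square[of y'] c by (simp add: y'_def)
  qed
  then obtain e where e: "e > 0" "\<And>y. e * (\<Sum>i<N. (y i)\<^sup>2) \<le> quad_form N a' y"
    using Suc.IH by blast
  define K where "K = (\<Sum>i<N. \<Sum>j<N. \<bar>b i * b j\<bar>)"
  have K: "K \<ge> 0" unfolding K_def by (intro sum_nonneg) auto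
  show ?case
  proof (intro exI[of _ "min (e / (1 + K / (2 * c\<^sup>2))) (c / 2)"] conjI allI)
    have "0 < 1 + K / (2 * c\<^sup>2)" using K c by (simp add: add_pos_nonneg)
    then show "min (e / (1 + K / (2 * c\<^sup>2))) (c / 2) > 0" using e(1) c by simp
    fix y :: "nat \<Rightarrow> real"
    have "(B y)\<^sup>2 \<le> K * (\<Sum>i<N. (y i)\<^sup>2)"
      using quad_form_le_abs_sum[of N "\<lambda>i j. b i * b j" y] unfolding quad_form_rank_one B_def K_def .
    moreover have "e * (\<Sum>i<N. (y i)\<^sup>2) + c * (y N + B y / (2 * c))\<^sup>2 \<le> quad_form (Suc N) a y"
      using square[of y] e(2)[of y] by simp
    moreover have "0 \<le> (\<Sum>i<N. (y i)\<^sup>2)" by (simp add: sum_nonneg)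
    ultimately have "min (e / (1 + K / (2 * c\<^sup>2))) (c / 2) * ((\<Sum>i<N. (y i)\<^sup>2) + (y N)\<^sup>2)
        \<le> quad_form (Suc N) a y"
      using completed_square_lower_bound[OF e(1) c K] by blast
    then show "min (e / (1 + K / (2 * c\<^sup>2))) (c / 2) * (\<Sum>i<Suc N. (y i)\<^sup>2) \<le> quad_form (Suc N) a y"
      by simp
  qed
qed

lemma scalar_prod_self_eq_sum_sq: "(x :: real vec) \<in> carrier_vec N \<Longrightarrow> x \<bullet> x = (\<Sum>i<N. (x $ i)\<^sup>2)"
  unfolding scalar_prod_def by (simp add: power2_eq_square lessThan_atLeast0)

lemma scalar_prod_self_nonneg: "0 \<le> (x :: real vec) \<bullet> x"
  using scalar_prod_self_eq_sum_sq[of x "dim_vec x"] by (simp add: sum_nonneg)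

lemma quad_form_mat:
  assumes "(M :: real mat) \<in> carrier_mat N N" and "x \<in> carrier_vec N"
  shows "x \<bullet> (M *\<^sub>v x) = quad_form N (\<lambda>i j. M $$ (i, j)) (\<lambda>i. x $ i)"
  using assms unfolding scalar_prod_def quad_form_def
  by (simp add: scalar_prod_def lessThan_atLeast0 row_def sum_distrib_left algebra_simps)

lemma pos_quad_mat_coercive:
  assumes M: "(M :: real mat) \<in> carrier_mat N N"
    and pos: "\<And>x. x \<in> carrier_vec N \<Longrightarrow> x \<noteq> 0\<^sub>v N \<Longrightarrow> x \<bullet> (M *\<^sub>v x) > 0"
  shows "\<exists>e>0. \<forall>x\<in>carrier_vec N. e * (x \<bullet> x) \<le> x \<bullet> (M *\<^sub>v x)"
proof -
  have "quad_form N (\<lambda>i j. M $$ (i, j)) y > 0" if "\<exists>i<N. y i \<noteq> 0" for y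
  proof -
    have "vec N y \<noteq> 0\<^sub>v N" using that by (metis index_vec index_zero_vec(1))
    then have "vec N y \<bullet> (M *\<^sub>v vec N y) > 0" using pos by simp
    moreover have "quad_form N (\<lambda>i j. M $$ (i, j)) (\<lambda>i. vec N y $ i) = quad_form N (\<lambda>i j. M $$ (i, j)) y"
      by (rule quad_form_cong) simp
    ultimately show ?thesis using quad_form_mat[OF M, of "vec N y"] by simp
  qed
  then obtain e where "e > 0" "\<And>y. e * (\<Sum>i<N. (y i)\<^sup>2) \<le> quad_form N (\<lambda>i j. M $$ (i, j)) y"
    using quad_form_pos_imp_coercive by blast
  then show ?thesis
    using quad_form_mat[OF M] scalar_prod_self_eq_sum_sq by metis
qed

lemma neg_def_coercive:
  assumes "neg_def N M"
  shows "\<exists>e>0. \<forall>x\<in>carrier_vec N. x \<bullet> (M *\<^sub>v x) \<le> - e * (x \<bullet> x)"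
proof -
  have M: "M \<in> carrier_mat N N" using assms unfolding neg_def_def by simp
  have minus: "x \<bullet> (- M *\<^sub>v x) = - (x \<bullet> (M *\<^sub>v x))" if "x \<in> carrier_vec N" for x
    using that M by (simp add: uminus_mult_mat_vec scalar_prod_uminus_right)
  obtain e where "e > 0" "\<forall>x\<in>carrier_vec N. e * (x \<bullet> x) \<le> x \<bullet> (- M *\<^sub>v x)"
    using pos_quad_mat_coercive[of "- M" N] M assms minus unfolding neg_def_def by auto
  then show ?thesis using minus by (intro exI[of _ e]) auto
qed

lemma quad_mat_upper_bound:
  assumes "(M :: real mat) \<in> carrier_mat N N"
  shows "\<exists>C\<ge>0. \<forall>x\<in>carrier_vec N. x \<bullet> (M *\<^sub>v x) \<le> C * (x \<bullet> x)"
  using quad_form_le_abs_sum quad_form_mat[OF assms] scalar_prod_self_eq_sum_sq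
  by (intro exI[of _ "\<Sum>i<N. \<Sum>j<N. \<bar>M $$ (i, j)\<bar>"]) (auto intro!: sum_nonneg)

lemma pos_def_nonneg:
  assumes "pos_def N P" and "x \<in> carrier_vec N"
  shows "0 \<le> x \<bullet> (P *\<^sub>v x)"
  using assms unfolding pos_def_def by (cases "x = 0\<^sub>v N") (auto intro: less_imp_le)

section \<open>Block quadratic forms\<close>

lemma mult_mat_mat_mult_vec:
  assumes "A \<in> carrier_mat m k" "B \<in> carrier_mat k p" "C \<in> carrier_mat p q" "y \<in> carrier_vec q"
  shows "(A * B * C) *\<^sub>v y = A *\<^sub>v (B *\<^sub>v (C *\<^sub>v y))"
proof -
  have "(A * B * C) *\<^sub>v y = (A * B) *\<^sub>v (C *\<^sub>v y)"
    by (rule assoc_mult_mat_vec) (use assms in auto)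
  also have "\<dots> = A *\<^sub>v (B *\<^sub>v (C *\<^sub>v y))"
    by (rule assoc_mult_mat_vec) (use assms in auto)
  finally show ?thesis .
qed

lemma zero_mat_mult_vec[simp]: "v \<in> carrier_vec m \<Longrightarrow> 0\<^sub>m n m *\<^sub>v v = 0\<^sub>v n"
  by (intro eq_vecI) (auto simp: scalar_prod_def)

lemma scalar_prod_transpose_mult_mult:
  assumes A: "(A :: real mat) \<in> carrier_mat k n" and P: "P \<in> carrier_mat k k'"
    and B: "B \<in> carrier_mat k' m" and x: "x \<in> carrier_vec n" and u: "u \<in> carrier_vec m"
  shows "x \<bullet> ((A\<^sup>T * P * B) *\<^sub>v u) = (A *\<^sub>v x) \<bullet> (P *\<^sub>v (B *\<^sub>v u))"
proof -
  have "(A\<^sup>T * P * B) *\<^sub>v u = A\<^sup>T *\<^sub>v (P *\<^sub>v (B *\<^sub>v u))"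
    using A P B u by (intro mult_mat_mat_mult_vec) auto
  moreover have "x \<bullet> (A\<^sup>T *\<^sub>v w) = (A *\<^sub>v x) \<bullet> w" if "w \<in> carrier_vec k" for w
    using transpose_vec_mult_scalar[OF A x that] comm_scalar_prod[OF x] comm_scalar_prod[OF that] A x that
    by (metis mult_mat_vec_carrier transpose_carrier_mat)
  ultimately show ?thesis using P B u by simp
qed

lemma four_block_quad_form:
  assumes A: "A \<in> carrier_mat n n" and B: "B \<in> carrier_mat n m"
    and C: "C \<in> carrier_mat m n" and D: "D \<in> carrier_mat m m"
    and x: "(x :: real vec) \<in> carrier_vec n" and u: "u \<in> carrier_vec m"
  shows "(x @\<^sub>v u) \<bullet> (four_block_mat A B C D *\<^sub>v (x @\<^sub>v u)) =
    x \<bullet> (A *\<^sub>v x) + x \<bullet> (B *\<^sub>v u) + u \<bullet> (C *\<^sub>v x) + u \<bullet> (D *\<^sub>v u)"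
  using assms
  by (simp add: four_block_mat_mult_vec scalar_prod_append scalar_prod_add_distrib[of _ n]
      scalar_prod_add_distrib[of _ m])

lemma plant_block_quad_form:
  assumes A: "A \<in> carrier_mat n n" and B: "B \<in> carrier_mat n m" and P: "(P :: real mat) \<in> carrier_mat n n"
    and x: "x \<in> carrier_vec n" and u: "u \<in> carrier_vec m"
  shows "(x @\<^sub>v u) \<bullet> (four_block_mat (A\<^sup>T * P * A - P) (A\<^sup>T * P * B) (B\<^sup>T * P * A) (B\<^sup>T * P * B)
           *\<^sub>v (x @\<^sub>v u))
         = (A *\<^sub>v x + B *\<^sub>v u) \<bullet> (P *\<^sub>v (A *\<^sub>v x + B *\<^sub>v u)) - x \<bullet> (P *\<^sub>v x)"
proof -
  define a where "a = A *\<^sub>v x"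
  define b where "b = B *\<^sub>v u"
  have ab: "a \<in> carrier_vec n" "b \<in> carrier_vec n" "P *\<^sub>v a \<in> carrier_vec n" "P *\<^sub>v b \<in> carrier_vec n"
    unfolding a_def b_def using A B P x u by auto
  have APA: "A\<^sup>T * P * A \<in> carrier_mat n n" using A P by simp
  have blocks: "A\<^sup>T * P * A - P \<in> carrier_mat n n" "A\<^sup>T * P * B \<in> carrier_mat n m"
    "B\<^sup>T * P * A \<in> carrier_mat m n" "B\<^sup>T * P * B \<in> carrier_mat m m"
    using A B P by auto
  have "(A\<^sup>T * P * A - P) *\<^sub>v x = (A\<^sup>T * P * A) *\<^sub>v x - P *\<^sub>v x"
    by (rule minus_mult_distrib_mat_vec[OF APA P x])
  then have diff: "x \<bullet> ((A\<^sup>T * P * A - P) *\<^sub>v x) = x \<bullet> ((A\<^sup>T * P * A) *\<^sub>v x) - x \<bullet> (P *\<^sub>v x)"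
    using scalar_prod_minus_distrib[OF x, of "(A\<^sup>T * P * A) *\<^sub>v x" "P *\<^sub>v x"] APA P x by simp
  have "(x @\<^sub>v u) \<bullet> (four_block_mat (A\<^sup>T * P * A - P) (A\<^sup>T * P * B) (B\<^sup>T * P * A) (B\<^sup>T * P * B)
           *\<^sub>v (x @\<^sub>v u))
      = a \<bullet> (P *\<^sub>v a) - x \<bullet> (P *\<^sub>v x) + a \<bullet> (P *\<^sub>v b) + b \<bullet> (P *\<^sub>v a) + b \<bullet> (P *\<^sub>v b)"
    unfolding four_block_quad_form[OF blocks x u] diff a_def b_def
      scalar_prod_transpose_mult_mult[OF A P A x x] scalar_prod_transpose_mult_mult[OF A P B x u]
      scalar_prod_transpose_mult_mult[OF B P A u x] scalar_prod_transpose_mult_mult[OF B P B u u]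
    by simp
  also have "\<dots> = (a + b) \<bullet> (P *\<^sub>v (a + b)) - x \<bullet> (P *\<^sub>v x)"
    using ab P by (simp add: mult_add_distrib_mat_vec[of _ n n] add_scalar_prod_distrib[of _ n]
        scalar_prod_add_distrib[of _ n])
  finally show ?thesis unfolding a_def b_def .
qed

section \<open>Diagonal and strictly lower triangular matrices\<close>

lemma diagv_carrier[simp]: "diagv a \<in> carrier_mat (dim_vec a) (dim_vec a)"
  unfolding diagv_def by simp

lemma diagv_mult_vec:
  assumes "v \<in> carrier_vec (dim_vec a)"
  shows "diagv a *\<^sub>v v = vec (dim_vec a) (\<lambda>i. a $ i * v $ i)"
proof (rule eq_vecI)
  fix i assume "i < dim_vec (vec (dim_vec a) (\<lambda>i. a $ i * v $ i))"
  then have i: "i < dim_vec a" by simp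
  have "(diagv a *\<^sub>v v) $ i = (\<Sum>j<dim_vec a. (if i = j then a $ i else 0) * v $ j)"
    using i assms unfolding diagv_def by (simp add: scalar_prod_def lessThan_atLeast0)
  also have "\<dots> = a $ i * v $ i"
    using i by (simp add: if_distrib[of "\<lambda>c. c * _"] sum.delta cong: if_cong)
  finally show "(diagv a *\<^sub>v v) $ i = vec (dim_vec a) (\<lambda>i. a $ i * v $ i) $ i" using i by simp
qed (simp add: diagv_def)

lemma quad_form_diagv:
  assumes "v \<in> carrier_vec (dim_vec a)"
  shows "v \<bullet> (diagv a *\<^sub>v v) = (\<Sum>i<dim_vec a. a $ i * (v $ i)\<^sup>2)"
  using assms unfolding diagv_mult_vec[OF assms]
  by (simp add: scalar_prod_def lessThan_atLeast0 power2_eq_square algebra_simps)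

lemma diagv_add: "dim_vec a = dim_vec b \<Longrightarrow> diagv a + diagv b = diagv (a + b)"
  unfolding diagv_def by (intro eq_matI) auto

lemma diagv_diff: "dim_vec a = dim_vec b \<Longrightarrow> diagv a - diagv b = diagv (a - b)"
  unfolding diagv_def by (intro eq_matI) auto

lemma smult_diagv: "c \<cdot>\<^sub>m diagv a = diagv (c \<cdot>\<^sub>v a)"
  unfolding diagv_def by (intro eq_matI) auto

lemma uminus_diagv: "- diagv a = diagv (- a)"
  unfolding diagv_def by (intro eq_matI) auto

lemma half_sum_diagv: "dim_vec a = dim_vec b \<Longrightarrow> (1/2) \<cdot>\<^sub>m (diagv a + diagv b) = diagv ((1/2) \<cdot>\<^sub>v (a + b))"
  by (simp add: diagv_add smult_diagv)

lemma half_diff_diagv: "dim_vec a = dim_vec b \<Longrightarrow> (1/2) \<cdot>\<^sub>m (diagv b - diagv a) = diagv ((1/2) \<cdot>\<^sub>v (b - a))"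
  by (simp add: diagv_diff smult_diagv)

lemma multiplier_block_quad_form:
  assumes v: "v \<in> carrier_vec (dim_vec lam)" and z: "z \<in> carrier_vec (dim_vec lam)"
  shows "(v @\<^sub>v z) \<bullet> (four_block_mat (diagv lam) (0\<^sub>m (dim_vec lam) (dim_vec lam))
            (0\<^sub>m (dim_vec lam) (dim_vec lam)) (- diagv lam) *\<^sub>v (v @\<^sub>v z))
         = (\<Sum>i<dim_vec lam. lam $ i * ((v $ i)\<^sup>2 - (z $ i)\<^sup>2))"
proof -
  have "z \<bullet> (- diagv lam *\<^sub>v z) = (\<Sum>i<dim_vec lam. - lam $ i * (z $ i)\<^sup>2)"
    using quad_form_diagv[of z "- lam"] z unfolding uminus_diagv by simp
  then show ?thesis
    using v z quad_form_diagv[OF v]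
    by (simp add: four_block_quad_form[of _ "dim_vec lam" _ "dim_vec lam"] sum.distrib[symmetric]
        algebra_simps)
qed

definition strictly_lower_triangular :: "'a :: zero mat \<Rightarrow> bool" where
  "strictly_lower_triangular A \<longleftrightarrow> (\<forall>i<dim_row A. \<forall>j<dim_col A. i \<le> j \<longrightarrow> A $$ (i, j) = 0)"

lemma strictly_lower_triangular_mult_diagv:
  assumes "strictly_lower_triangular A" and "dim_col A = dim_vec d"
  shows "strictly_lower_triangular (A * diagv d)"
  unfolding strictly_lower_triangular_def
proof (intro allI impI)
  fix i j assume ij: "i < dim_row (A * diagv d)" "j < dim_col (A * diagv d)" "i \<le> j"
  have "(A * diagv d) $$ (i, j) = (\<Sum>k<dim_vec d. A $$ (i, k) * (if k = j then d $ k else 0))"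
    using ij assms(2) unfolding diagv_def by (simp add: scalar_prod_def lessThan_atLeast0)
  also have "\<dots> = 0"
    using assms ij unfolding strictly_lower_triangular_def diagv_def by (intro sum.neutral) auto
  finally show "(A * diagv d) $$ (i, j) = 0" .
qed

lemma minv_one_minus_strictly_lower_triangular:
  assumes C: "(C :: real mat) \<in> carrier_mat N N" and low: "strictly_lower_triangular C"
  shows "minv (1\<^sub>m N - C) \<in> carrier_mat N N" "minv (1\<^sub>m N - C) * (1\<^sub>m N - C) = 1\<^sub>m N"
proof -
  let ?A = "1\<^sub>m N - C"
  have A: "?A \<in> carrier_mat N N" using minus_carrier_mat[OF C] by simp
  have "det ?A = prod_list (diag_mat ?A)"
    by (rule det_lower_triangular[OF _ A]) (use C low in \<open>simp add: strictly_lower_triangular_def\<close>)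
  also have "diag_mat ?A = replicate N 1"
    using C low unfolding diag_mat_def strictly_lower_triangular_def by (intro nth_equalityI) auto
  finally have "?A \<in> Units (ring_mat TYPE(real) N ())"
    using det_non_zero_imp_unit[OF A] by simp
  then obtain B where "mat_inverse ?A = Some B"
    using mat_inverse(1)[OF A, of "()"] by (cases "mat_inverse ?A") auto
  then show "minv ?A \<in> carrier_mat N N" "minv ?A * ?A = 1\<^sub>m N"
    using mat_inverse(2)[OF A] unfolding minv_def by auto
qed

section \<open>The ellipsoid lies in the polytope\<close>

lemma abs_le_of_quadratic_nonneg:
  fixes c q v :: real
  assumes c: "0 \<le> c" and v: "v \<le> 1" and nonneg: "\<And>s. 0 \<le> c\<^sup>2 * s\<^sup>2 + 2 * s * q + v"
  shows "\<bar>q\<bar> \<le> c"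
proof (cases "c = 0")
  case True
  have "q = 0"
  proof (rule ccontr)
    assume "q \<noteq> 0"
    then show False using nonneg[of "- (v + 1) / (2 * q)"] True by (simp add: field_simps)
  qed
  then show ?thesis using True by simp
next
  case False
  then have "c > 0" using c by simp
  have "0 \<le> c\<^sup>2 * (- q / c\<^sup>2)\<^sup>2 + 2 * (- q / c\<^sup>2) * q + v" by (rule nonneg)
  then have "q\<^sup>2 \<le> v * c\<^sup>2" using \<open>c > 0\<close> by (simp add: field_simps power2_eq_square)
  also have "\<dots> \<le> c\<^sup>2" using mult_right_mono[OF v, of "c\<^sup>2"] by simp
  finally show ?thesis using c by (metis abs_le_square_iff abs_of_nonneg)
qed

lemma row_block_quad_form:
  assumes r: "(r :: real vec) \<in> carrier_vec n" and P: "P \<in> carrier_mat n n" and x: "x \<in> carrier_vec n"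
  shows "(vec 1 (\<lambda>_. s) @\<^sub>v x) \<bullet>
           (four_block_mat (mat 1 1 (\<lambda>_. c)) (mat_of_row r) ((mat_of_row r)\<^sup>T) P *\<^sub>v (vec 1 (\<lambda>_. s) @\<^sub>v x))
         = c * s\<^sup>2 + 2 * s * (r \<bullet> x) + x \<bullet> (P *\<^sub>v x)"
proof -
  let ?s = "vec 1 (\<lambda>_. s)"
  have R: "mat_of_row r \<in> carrier_mat 1 n" using r by simp
  have Rx: "mat_of_row r *\<^sub>v x = vec 1 (\<lambda>_. r \<bullet> x)" by (rule eq_vecI) auto
  have "x \<bullet> ((mat_of_row r)\<^sup>T *\<^sub>v ?s) = ?s \<bullet> (mat_of_row r *\<^sub>v x)"
    using transpose_vec_mult_scalar[OF R x vec_carrier] comm_scalar_prod[OF x, of "(mat_of_row r)\<^sup>T *\<^sub>v ?s"] R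
    by simp
  moreover have "?s \<bullet> (mat 1 1 (\<lambda>_. c) *\<^sub>v ?s) = c * s\<^sup>2"
    by (simp add: scalar_prod_def power2_eq_square)
  moreover have "?s \<bullet> vec 1 (\<lambda>_. r \<bullet> x) = s * (r \<bullet> x)" by (simp add: scalar_prod_def)
  moreover have "(?s @\<^sub>v x) \<bullet>
      (four_block_mat (mat 1 1 (\<lambda>_. c)) (mat_of_row r) ((mat_of_row r)\<^sup>T) P *\<^sub>v (?s @\<^sub>v x))
    = ?s \<bullet> (mat 1 1 (\<lambda>_. c) *\<^sub>v ?s) + ?s \<bullet> (mat_of_row r *\<^sub>v x)
      + x \<bullet> ((mat_of_row r)\<^sup>T *\<^sub>v ?s) + x \<bullet> (P *\<^sub>v x)"
    by (rule four_block_quad_form) (use R P x in auto)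
  ultimately show ?thesis unfolding Rx by simp
qed

lemma ellipsoid_subset_polyX:
  assumes H: "H \<in> carrier_mat nX nG" and h: "h \<in> carrier_vec nX" and h0: "\<forall>i<nX. 0 \<le> h $ i"
    and P: "P \<in> carrier_mat nG nG"
    and psd: "\<forall>i<nX. psd (Suc nG) (four_block_mat (mat 1 1 (\<lambda>_. (h $ i)\<^sup>2)) (mat_of_row (row H i))
                                    ((mat_of_row (row H i))\<^sup>T) P)"
  shows "ellipsoid nG P \<subseteq> polyX nG H h"
proof
  fix x assume "x \<in> ellipsoid nG P"
  then have x: "x \<in> carrier_vec nG" and V: "x \<bullet> (P *\<^sub>v x) \<le> 1" unfolding ellipsoid_def by auto
  have "- (h $ i) \<le> (H *\<^sub>v x) $ i \<and> (H *\<^sub>v x) $ i \<le> h $ i" if i: "i < nX" for i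
  proof -
    have r: "row H i \<in> carrier_vec nG" using H i by simp
    have "0 \<le> (h $ i)\<^sup>2 * s\<^sup>2 + 2 * s * (row H i \<bullet> x) + x \<bullet> (P *\<^sub>v x)" for s
    proof -
      have "vec 1 (\<lambda>_. s) @\<^sub>v x \<in> carrier_vec (Suc nG)"
        using append_carrier_vec[of "vec 1 (\<lambda>_. s)" 1 x nG] x by simp
      then show ?thesis
        using psd i unfolding psd_def row_block_quad_form[OF r P x, symmetric] by blast
    qed
    then have "\<bar>row H i \<bullet> x\<bar> \<le> h $ i"
      using abs_le_of_quadratic_nonneg h0 i V by blast
    then have "\<bar>(H *\<^sub>v x) $ i\<bar> \<le> h $ i" using H i by simp
    then show ?thesis by (simp add: abs_le_iff)
  qed
  then show "x \<in> polyX nG H h" unfolding polyX_def using x h by auto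
qed

section \<open>The network as a feedback interconnection\<close>

lemma off_Suc: "1 \<le> i \<Longrightarrow> off n (Suc i) = off n i + n i"
  unfolding off_def by (simp add: add.commute)

lemma off_Suc_0 [simp]: "off n (Suc 0) = 0"
  unfolding off_def by simp

lemma n1_le_off: "1 \<le> i \<Longrightarrow> n 1 \<le> off n (Suc i)"
  unfolding off_def by (rule member_le_sum) auto

lemma vec_zero_append [simp]: "vec 0 f @\<^sub>v v = v"
  by (intro eq_vecI) auto

lemma map_vec_append: "map_vec f (a @\<^sub>v b) = map_vec f a @\<^sub>v map_vec f b"
  by (intro eq_vecI) auto

lemma stackv_carrier:
  "\<forall>j\<in>{1..i}. v j \<in> carrier_vec (n j) \<Longrightarrow> stackv v i \<in> carrier_vec (off n (Suc i))"
  by (induction i) (auto simp: off_Suc)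

lemma layer_w_carrier:
  assumes "x \<in> carrier_vec (n 0)" and "\<forall>j\<in>{1..i}. W j \<in> carrier_mat (n j) (n (j - 1))"
  shows "layer_w \<phi> W x i \<in> carrier_vec (n i)"
  using assms by (induction i) (auto simp: Ball_def)

lemma layer_v_carrier:
  assumes "x \<in> carrier_vec (n 0)" and "\<forall>j\<in>{1..i}. W j \<in> carrier_mat (n j) (n (j - 1))"
    and "1 \<le> i"
  shows "layer_v \<phi> W x i \<in> carrier_vec (n i)"
proof -
  have "layer_w \<phi> W x (i - 1) \<in> carrier_vec (n (i - 1))"
    using assms by (intro layer_w_carrier) auto
  then show ?thesis using assms unfolding layer_v_def by (metis atLeastAtMost_iff le_refl mult_mat_vec_carrier)
qed

lemma stackv_layer_w: "stackv (layer_w \<phi> W x) i = map_vec \<phi> (stackv (layer_v \<phi> W x) i)"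
proof (induction i)
  case 0
  show ?case by (intro eq_vecI) auto
next
  case (Suc i)
  then show ?case by (simp add: map_vec_append layer_v_def)
qed

lemma rowblk_mult:
  assumes k: "1 \<le> k" and W: "W (Suc k) \<in> carrier_mat (n (Suc k)) (n k)"
    and s: "s \<in> carrier_vec (off n k)" and w: "w \<in> carrier_vec (n k)"
  shows "rowblk n W (Suc k) *\<^sub>v (s @\<^sub>v w) = W (Suc k) *\<^sub>v w"
proof (rule eq_vecI)
  fix r assume "r < dim_vec (W (Suc k) *\<^sub>v w)"
  then have r: "r < n (Suc k)" using W by simp
  have "row (rowblk n W (Suc k)) r = 0\<^sub>v (off n k) @\<^sub>v row (W (Suc k)) r"
    using W r off_Suc[OF k, of n] unfolding rowblk_def by (intro eq_vecI) auto
  then have "(rowblk n W (Suc k) *\<^sub>v (s @\<^sub>v w)) $ r = 0\<^sub>v (off n k) \<bullet> s + row (W (Suc k)) r \<bullet> w"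
    using r s w W by (simp add: rowblk_def scalar_prod_append[of _ "off n k" _ "n k"])
  then show "(rowblk n W (Suc k) *\<^sub>v (s @\<^sub>v w)) $ r = (W (Suc k) *\<^sub>v w) $ r"
    using r s W by simp
qed (use W in \<open>simp add: rowblk_def\<close>)

lemma Nvw_carrier: "Nvw n W (Suc i) \<in> carrier_mat (off n (Suc (Suc i))) (off n (Suc (Suc i)))"
  by (induction i) (auto simp: off_Suc rowblk_def)

lemma Nvw_strictly_lower_triangular: "strictly_lower_triangular (Nvw n W i)"
proof (induction n W i rule: Nvw.induct)
  case (3 n W i)
  define m where "m = off n (Suc (Suc i))"
  have A: "Nvw n W (Suc i) \<in> carrier_mat m m" unfolding m_def by (rule Nvw_carrier)
  show ?case
    unfolding strictly_lower_triangular_def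
  proof (intro allI impI)
    fix r c
    assume rc: "r < dim_row (Nvw n W (Suc (Suc i)))" "c < dim_col (Nvw n W (Suc (Suc i)))" "r \<le> c"
    then have "r < m + n (Suc (Suc i))" "c < m + n (Suc (Suc i))" using A by auto
    then show "Nvw n W (Suc (Suc i)) $$ (r, c) = 0"
      using 3 A rc(3) unfolding m_def strictly_lower_triangular_def
      by (auto simp: index_mat_four_block rowblk_def)
  qed
qed (auto simp: strictly_lower_triangular_def)

lemma Nvx_carrier: "Nvx n W l \<in> carrier_mat (off n (Suc l)) (n 0)"
  unfolding Nvx_def by simp

lemma Nuw_carrier: "Nuw n W l \<in> carrier_mat (n (Suc l)) (off n (Suc l))"
  unfolding Nuw_def rowblk_def by simp

lemma Nvx_one: "W 1 \<in> carrier_mat (n 1) (n 0) \<Longrightarrow> Nvx n W 1 = W 1"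
  unfolding Nvx_def off_def by (intro eq_matI) auto

lemma Nvx_Suc_mult:
  assumes i: "1 \<le> i" and x: "x \<in> carrier_vec (n 0)"
  shows "Nvx n W (Suc i) *\<^sub>v x = (Nvx n W i *\<^sub>v x) @\<^sub>v 0\<^sub>v (n (Suc i))"
proof (rule eq_vecI)
  have dim: "off n (Suc (Suc i)) = off n (Suc i) + n (Suc i)" using i by (simp add: off_Suc)
  fix r assume "r < dim_vec ((Nvx n W i *\<^sub>v x) @\<^sub>v 0\<^sub>v (n (Suc i)))"
  then have r: "r < off n (Suc i) + n (Suc i)" by (simp add: Nvx_def)
  show "(Nvx n W (Suc i) *\<^sub>v x) $ r = ((Nvx n W i *\<^sub>v x) @\<^sub>v 0\<^sub>v (n (Suc i))) $ r"
  proof (cases "r < off n (Suc i)")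
    case True
    then have "row (Nvx n W (Suc i)) r = row (Nvx n W i) r"
      using dim unfolding Nvx_def by (intro eq_vecI) auto
    then show ?thesis using True r dim by (simp add: Nvx_def)
  next
    case False
    then have "\<not> r < n 1" using n1_le_off[OF i, of n] by simp
    then have "row (Nvx n W (Suc i)) r = 0\<^sub>v (n 0)"
      using r dim unfolding Nvx_def by (intro eq_vecI) auto
    then show ?thesis using False r dim x by (simp add: Nvx_def)
  qed
qed (simp add: Nvx_def off_Suc i)

lemma network_preactivation_lfr:
  assumes "1 \<le> l" and x: "x \<in> carrier_vec (n 0)"
    and "\<forall>j\<in>{1..l}. W j \<in> carrier_mat (n j) (n (j - 1))"
  shows "Nvx n W l *\<^sub>v x + Nvw n W l *\<^sub>v stackv (layer_w \<phi> W x) l = stackv (layer_v \<phi> W x) l"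
  using assms
proof (induction l rule: nat_induct_at_least)
  case base
  then have W1: "W 1 \<in> carrier_mat (n 1) (n 0)" by simp
  have "layer_w \<phi> W x 1 \<in> carrier_vec (n 1)" by (rule layer_w_carrier) (use x W1 in auto)
  then show ?case using W1 x Nvx_one[where W = W and n = n, OF W1] by (simp add: layer_v_def)
next
  case (Suc k)
  obtain i where k: "k = Suc i" using Suc(1) by (cases k) auto
  let ?w = "layer_w \<phi> W x" and ?v = "layer_v \<phi> W x"
  have W: "\<forall>j\<in>{1..k}. W j \<in> carrier_mat (n j) (n (j - 1))" using Suc.prems(2) by auto
  have WSk: "W (Suc k) \<in> carrier_mat (n (Suc k)) (n k)" using bspec[OF Suc.prems(2), of "Suc k"] by simp
  have w: "\<forall>j\<in>{1..Suc k}. ?w j \<in> carrier_vec (n j)"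
    using Suc.prems by (auto intro!: layer_w_carrier)
  have st: "stackv ?w k \<in> carrier_vec (off n (Suc k))" "stackv ?w i \<in> carrier_vec (off n k)"
    unfolding k by (rule stackv_carrier, use w k in auto)+
  have wk: "?w k \<in> carrier_vec (n k)" "?w (Suc k) \<in> carrier_vec (n (Suc k))"
    using w Suc(1) by (auto simp del: layer_w.simps)
  have Nvw: "Nvw n W k \<in> carrier_mat (off n (Suc k)) (off n (Suc k))"
    unfolding k by (rule Nvw_carrier)
  have Nvx: "Nvx n W k *\<^sub>v x \<in> carrier_vec (off n (Suc k))"
    by (rule mult_mat_vec_carrier[OF Nvx_carrier[where n = n and W = W and l = k] x])
  have "Nvw n W (Suc k) *\<^sub>v stackv ?w (Suc k)
      = (Nvw n W k *\<^sub>v stackv ?w k + 0\<^sub>m (off n (Suc k)) (n (Suc k)) *\<^sub>v ?w (Suc k))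
        @\<^sub>v (rowblk n W (Suc k) *\<^sub>v stackv ?w k + 0\<^sub>m (n (Suc k)) (n (Suc k)) *\<^sub>v ?w (Suc k))"
    unfolding k Nvw.simps stackv.simps(2)[of _ "Suc i"]
    by (rule four_block_mat_mult_vec) (use Nvw st wk k in \<open>auto simp: rowblk_def\<close>)
  also have "rowblk n W (Suc k) *\<^sub>v stackv ?w k = W (Suc k) *\<^sub>v ?w k"
    unfolding k stackv.simps(2) by (rule rowblk_mult) (use WSk st wk k in auto)
  finally have "Nvw n W (Suc k) *\<^sub>v stackv ?w (Suc k) = (Nvw n W k *\<^sub>v stackv ?w k) @\<^sub>v ?v (Suc k)"
    using Nvw st wk WSk by (simp add: layer_v_def)
  moreover have "Nvx n W (Suc k) *\<^sub>v x = (Nvx n W k *\<^sub>v x) @\<^sub>v 0\<^sub>v (n (Suc k))"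
    using Suc(1) x by (rule Nvx_Suc_mult)
  moreover have "?v (Suc k) \<in> carrier_vec (n (Suc k))"
    using WSk wk by (simp add: layer_v_def)
  ultimately show ?case
    using Suc.IH W x Nvx Nvw st wk by (simp add: append_vec_add[of _ "off n (Suc k)" _ _ "n (Suc k)"])
qed

lemma network_output_lfr:
  assumes l: "1 \<le> l" and x: "x \<in> carrier_vec (n 0)"
    and W: "\<forall>j\<in>{1..Suc l}. W j \<in> carrier_mat (n j) (n (j - 1))"
  shows "Nuw n W l *\<^sub>v stackv (layer_w \<phi> W x) l = nn_ctrl \<phi> W l x"
proof -
  obtain i where i: "l = Suc i" using l by (cases l) auto
  have w: "\<forall>j\<in>{1..l}. layer_w \<phi> W x j \<in> carrier_vec (n j)"
    using x W by (auto intro!: layer_w_carrier)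
  have "stackv (layer_w \<phi> W x) l = stackv (layer_w \<phi> W x) i @\<^sub>v layer_w \<phi> W x l"
    unfolding i stackv.simps ..
  also have "Nuw n W l *\<^sub>v \<dots> = W (Suc l) *\<^sub>v layer_w \<phi> W x l"
    unfolding Nuw_def
  proof (rule rowblk_mult[OF l])
    show "stackv (layer_w \<phi> W x) i \<in> carrier_vec (off n l)"
      using w unfolding i by (auto intro!: stackv_carrier)
  qed (use bspec[OF W, of "Suc l"] w l in auto)
  finally show ?thesis unfolding nn_ctrl_def .
qed

section \<open>Sector bounds and loop transformation\<close>

lemma sector_midpoint_form:
  fixes a b v w :: real
  assumes ab: "a \<le> b" and sector: "0 \<le> (w - a * v) * (b * v - w)"
  shows "\<exists>\<zeta>. w = (a + b) / 2 * v + (b - a) / 2 * \<zeta> \<and> \<zeta>\<^sup>2 \<le> v\<^sup>2"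
proof (cases "a = b")
  case True
  then have "(w - a * v)\<^sup>2 \<le> 0" using sector by (simp add: power2_eq_square algebra_simps)
  then have "w = a * v" by simp
  then show ?thesis using True by (intro exI[of _ 0]) (simp add: algebra_simps)
next
  case False
  then have ba: "b - a > 0" using ab by simp
  define \<zeta> where "\<zeta> = (2 * w - (a + b) * v) / (b - a)"
  have "(2 * w - (a + b) * v)\<^sup>2 \<le> v\<^sup>2 * (b - a)\<^sup>2"
    using sector by (simp add: power2_eq_square algebra_simps)
  then have "\<zeta>\<^sup>2 \<le> v\<^sup>2"
    using ba unfolding \<zeta>_def by (simp add: power_divide power_mult_distrib divide_le_eq)
  moreover have "w = (a + b) / 2 * v + (b - a) / 2 * \<zeta>"
    using ba unfolding \<zeta>_def by (simp add: field_simps)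
  ultimately show ?thesis by blast
qed

lemma sector_vec_midpoint_form:
  assumes \<alpha>: "\<alpha> \<in> carrier_vec N" and \<beta>: "\<beta> \<in> carrier_vec N"
    and v: "v \<in> carrier_vec N" and w: "w \<in> carrier_vec N"
    and \<alpha>\<beta>: "\<forall>i<N. \<alpha> $ i \<le> \<beta> $ i"
    and sector: "\<forall>i<N. 0 \<le> (w $ i - \<alpha> $ i * v $ i) * (\<beta> $ i * v $ i - w $ i)"
  shows "\<exists>z\<in>carrier_vec N.
           w = diagv ((1/2) \<cdot>\<^sub>v (\<alpha> + \<beta>)) *\<^sub>v v + diagv ((1/2) \<cdot>\<^sub>v (\<beta> - \<alpha>)) *\<^sub>v z \<and>
           (\<forall>i<N. (z $ i)\<^sup>2 \<le> (v $ i)\<^sup>2)"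
proof -
  have "\<forall>i. \<exists>\<zeta>. i < N \<longrightarrow>
      w $ i = (\<alpha> $ i + \<beta> $ i) / 2 * v $ i + (\<beta> $ i - \<alpha> $ i) / 2 * \<zeta> \<and> \<zeta>\<^sup>2 \<le> (v $ i)\<^sup>2"
    using sector_midpoint_form \<alpha>\<beta> sector by blast
  then obtain \<zeta> where \<zeta>: "\<And>i. i < N \<Longrightarrow>
      w $ i = (\<alpha> $ i + \<beta> $ i) / 2 * v $ i + (\<beta> $ i - \<alpha> $ i) / 2 * \<zeta> i \<and> (\<zeta> i)\<^sup>2 \<le> (v $ i)\<^sup>2"
    by metis
  show ?thesis
  proof (intro bexI conjI allI impI)
    show "w = diagv ((1/2) \<cdot>\<^sub>v (\<alpha> + \<beta>)) *\<^sub>v v + diagv ((1/2) \<cdot>\<^sub>v (\<beta> - \<alpha>)) *\<^sub>v vec N \<zeta>"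
      using \<alpha> \<beta> v w \<zeta> by (intro eq_vecI) (auto simp: diagv_mult_vec)
  qed (use \<zeta> in auto)
qed

lemma diff_eq_of_eq_add:
  assumes "(a :: 'a :: ab_group_add vec) \<in> carrier_vec N" "b \<in> carrier_vec N" "c \<in> carrier_vec N"
    "d \<in> carrier_vec N" and "a = b + (c + d)"
  shows "a - c = b + d"
  using assms by (intro eq_vecI) auto

lemma C_eq_mult_diagv:
  assumes "dim_vec \<alpha> = dim_vec \<beta>"
  shows "C1 n W l \<alpha> \<beta> = Nuw n W l * diagv ((1/2) \<cdot>\<^sub>v (\<beta> - \<alpha>))"
    and "C2 n W l \<alpha> \<beta> = Nuw n W l * diagv ((1/2) \<cdot>\<^sub>v (\<alpha> + \<beta>))"
    and "C3 n W l \<alpha> \<beta> = Nvw n W l * diagv ((1/2) \<cdot>\<^sub>v (\<beta> - \<alpha>))"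
    and "C4 n W l \<alpha> \<beta> = Nvw n W l * diagv ((1/2) \<cdot>\<^sub>v (\<alpha> + \<beta>))"
  unfolding C1_def C2_def C3_def C4_def using assms by (simp_all add: half_sum_diagv half_diff_diagv)

lemma IC4inv_left_inverse:
  fixes n :: "nat \<Rightarrow> nat" and W :: "nat \<Rightarrow> real mat" and l :: nat
  defines "N \<equiv> off n (Suc l)"
  assumes l: "1 \<le> l" and \<alpha>: "\<alpha> \<in> carrier_vec N" and \<beta>: "\<beta> \<in> carrier_vec N"
  shows "IC4inv n W l \<alpha> \<beta> \<in> carrier_mat N N"
    and "IC4inv n W l \<alpha> \<beta> * (1\<^sub>m N - C4 n W l \<alpha> \<beta>) = 1\<^sub>m N"
proof -
  obtain i where i: "l = Suc i" using l by (cases l) auto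
  have "Nvw n W l \<in> carrier_mat N N" unfolding N_def i by (rule Nvw_carrier)
  moreover have "diagv ((1/2) \<cdot>\<^sub>v (\<alpha> + \<beta>)) \<in> carrier_mat N N"
    using diagv_carrier[of "(1/2) \<cdot>\<^sub>v (\<alpha> + \<beta>)"] \<beta> by simp
  ultimately have "C4 n W l \<alpha> \<beta> \<in> carrier_mat N N" "strictly_lower_triangular (C4 n W l \<alpha> \<beta>)"
    unfolding C_eq_mult_diagv(4)[of \<alpha> \<beta>, OF carrier_vecD[OF \<alpha>, folded carrier_vecD[OF \<beta>]]]
    using \<beta> by (auto intro!: strictly_lower_triangular_mult_diagv Nvw_strictly_lower_triangular)
  from minv_one_minus_strictly_lower_triangular[OF this]
  show "IC4inv n W l \<alpha> \<beta> \<in> carrier_mat N N" "IC4inv n W l \<alpha> \<beta> * (1\<^sub>m N - C4 n W l \<alpha> \<beta>) = 1\<^sub>m N"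
    unfolding IC4inv_def N_def by auto
qed

lemma tN_carrier:
  fixes n :: "nat \<Rightarrow> nat" and W :: "nat \<Rightarrow> real mat" and l :: nat
  defines "N \<equiv> off n (Suc l)"
  assumes l: "1 \<le> l" and \<alpha>: "\<alpha> \<in> carrier_vec N" and \<beta>: "\<beta> \<in> carrier_vec N"
  shows "tNux n W l \<alpha> \<beta> \<in> carrier_mat (n (Suc l)) (n 0)" "tNuz n W l \<alpha> \<beta> \<in> carrier_mat (n (Suc l)) N"
    "tNvx n W l \<alpha> \<beta> \<in> carrier_mat N (n 0)" "tNvz n W l \<alpha> \<beta> \<in> carrier_mat N N"
proof -
  obtain i where i: "l = Suc i" using l by (cases l) auto
  have Nvw: "Nvw n W l \<in> carrier_mat N N" unfolding N_def i by (rule Nvw_carrier)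
  have M: "IC4inv n W l \<alpha> \<beta> \<in> carrier_mat N N"
    using IC4inv_left_inverse(1)[OF l \<alpha>[unfolded N_def] \<beta>[unfolded N_def]] unfolding N_def .
  have D: "(1/2) \<cdot>\<^sub>m (diagv \<alpha> + diagv \<beta>) \<in> carrier_mat N N" "(1/2) \<cdot>\<^sub>m (diagv \<beta> - diagv \<alpha>) \<in> carrier_mat N N"
    using \<alpha> \<beta> by (auto simp: diagv_def)
  have C: "C1 n W l \<alpha> \<beta> \<in> carrier_mat (n (Suc l)) N" "C2 n W l \<alpha> \<beta> \<in> carrier_mat (n (Suc l)) N"
    "C3 n W l \<alpha> \<beta> \<in> carrier_mat N N"
    unfolding C1_def C2_def C3_def using Nuw_carrier[of n W l] Nvw D unfolding N_def[symmetric] by auto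
  show "tNux n W l \<alpha> \<beta> \<in> carrier_mat (n (Suc l)) (n 0)" "tNuz n W l \<alpha> \<beta> \<in> carrier_mat (n (Suc l)) N"
    "tNvx n W l \<alpha> \<beta> \<in> carrier_mat N (n 0)" "tNvz n W l \<alpha> \<beta> \<in> carrier_mat N N"
    unfolding tNux_def tNuz_def tNvx_def tNvz_def Nux_def
    using C M Nvx_carrier[of n W l] unfolding N_def[symmetric]
    by (auto intro!: add_carrier_mat mult_carrier_mat)
qed

lemma tR_carrier:
  fixes n :: "nat \<Rightarrow> nat" and W :: "nat \<Rightarrow> real mat" and l :: nat
  defines "N \<equiv> off n (Suc l)"
  assumes l: "1 \<le> l" and \<alpha>: "\<alpha> \<in> carrier_vec N" and \<beta>: "\<beta> \<in> carrier_vec N"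
  shows "tRV n W l \<alpha> \<beta> \<in> carrier_mat (n 0 + n (Suc l)) (n 0 + N)"
    and "tRphi n W l \<alpha> \<beta> \<in> carrier_mat (N + N) (n 0 + N)"
  using tN_carrier[OF l \<alpha>[unfolded N_def] \<beta>[unfolded N_def]]
  unfolding tRV_def tRphi_def N_def by (auto intro!: four_block_carrier_mat)

lemma tR_mult_vec:
  fixes n :: "nat \<Rightarrow> nat" and W :: "nat \<Rightarrow> real mat" and l :: nat
  defines "N \<equiv> off n (Suc l)"
  assumes l: "1 \<le> l" and \<alpha>: "\<alpha> \<in> carrier_vec N" and \<beta>: "\<beta> \<in> carrier_vec N"
    and x: "x \<in> carrier_vec (n 0)" and z: "z \<in> carrier_vec N"
  shows "tRphi n W l \<alpha> \<beta> *\<^sub>v (x @\<^sub>v z) = (tNvx n W l \<alpha> \<beta> *\<^sub>v x + tNvz n W l \<alpha> \<beta> *\<^sub>v z) @\<^sub>v z"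
    and "tRV n W l \<alpha> \<beta> *\<^sub>v (x @\<^sub>v z) = x @\<^sub>v (tNux n W l \<alpha> \<beta> *\<^sub>v x + tNuz n W l \<alpha> \<beta> *\<^sub>v z)"
proof -
  note tN = tN_carrier[where W = W, OF l \<alpha>[unfolded N_def] \<beta>[unfolded N_def], folded N_def]
  have "tRphi n W l \<alpha> \<beta> *\<^sub>v (x @\<^sub>v z)
      = (tNvx n W l \<alpha> \<beta> *\<^sub>v x + tNvz n W l \<alpha> \<beta> *\<^sub>v z) @\<^sub>v (0\<^sub>m N (n 0) *\<^sub>v x + 1\<^sub>m N *\<^sub>v z)"
    unfolding tRphi_def N_def[symmetric] by (rule four_block_mat_mult_vec) (use tN x z in auto)
  then show "tRphi n W l \<alpha> \<beta> *\<^sub>v (x @\<^sub>v z) = (tNvx n W l \<alpha> \<beta> *\<^sub>v x + tNvz n W l \<alpha> \<beta> *\<^sub>v z) @\<^sub>v z"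
    using x z by simp
  have "tRV n W l \<alpha> \<beta> *\<^sub>v (x @\<^sub>v z)
      = (1\<^sub>m (n 0) *\<^sub>v x + 0\<^sub>m (n 0) N *\<^sub>v z) @\<^sub>v (tNux n W l \<alpha> \<beta> *\<^sub>v x + tNuz n W l \<alpha> \<beta> *\<^sub>v z)"
    unfolding tRV_def N_def[symmetric] by (rule four_block_mat_mult_vec) (use tN x z in auto)
  then show "tRV n W l \<alpha> \<beta> *\<^sub>v (x @\<^sub>v z) = x @\<^sub>v (tNux n W l \<alpha> \<beta> *\<^sub>v x + tNuz n W l \<alpha> \<beta> *\<^sub>v z)"
    using x z by simp
qed

lemma loop_transformation_preactivation:
  fixes n :: "nat \<Rightarrow> nat" and W :: "nat \<Rightarrow> real mat" and l :: nat
  defines "N \<equiv> off n (Suc l)"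
  assumes l: "1 \<le> l" and \<alpha>: "\<alpha> \<in> carrier_vec N" and \<beta>: "\<beta> \<in> carrier_vec N"
    and x: "x \<in> carrier_vec (n 0)" and v: "v \<in> carrier_vec N" and z: "z \<in> carrier_vec N"
    and v_eq: "Nvx n W l *\<^sub>v x + Nvw n W l *\<^sub>v w = v"
    and w_eq: "w = diagv ((1/2) \<cdot>\<^sub>v (\<alpha> + \<beta>)) *\<^sub>v v + diagv ((1/2) \<cdot>\<^sub>v (\<beta> - \<alpha>)) *\<^sub>v z"
  shows "v = tNvx n W l \<alpha> \<beta> *\<^sub>v x + tNvz n W l \<alpha> \<beta> *\<^sub>v z"
proof -
  define Dp where "Dp = diagv ((1/2) \<cdot>\<^sub>v (\<alpha> + \<beta>))"
  define Dm where "Dm = diagv ((1/2) \<cdot>\<^sub>v (\<beta> - \<alpha>))"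
  define M where "M = IC4inv n W l \<alpha> \<beta>"
  let ?Nvx = "Nvx n W l" and ?Nvw = "Nvw n W l" and ?C3 = "C3 n W l \<alpha> \<beta>" and ?C4 = "C4 n W l \<alpha> \<beta>"
  have D: "Dp \<in> carrier_mat N N" "Dm \<in> carrier_mat N N"
    unfolding Dp_def Dm_def using \<alpha> \<beta> diagv_carrier by (metis carrier_vecD index_add_vec(2)
        index_minus_vec(2) index_smult_vec(2))+
  have C: "?C3 = ?Nvw * Dm" "?C4 = ?Nvw * Dp"
    unfolding Dp_def Dm_def using C_eq_mult_diagv \<alpha> \<beta> by auto
  obtain i where i: "l = Suc i" using l by (cases l) auto
  have Nvw: "?Nvw \<in> carrier_mat N N" unfolding N_def i by (rule Nvw_carrier)
  have Nvx: "?Nvx \<in> carrier_mat N (n 0)" unfolding N_def by (rule Nvx_carrier)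
  have C34: "?C3 \<in> carrier_mat N N" "?C4 \<in> carrier_mat N N" unfolding C using Nvw D by auto
  have M: "M \<in> carrier_mat N N" "M * (1\<^sub>m N - ?C4) = 1\<^sub>m N"
    using IC4inv_left_inverse[OF l \<alpha>[unfolded N_def] \<beta>[unfolded N_def]] unfolding M_def N_def by auto
  have vecs: "?Nvx *\<^sub>v x \<in> carrier_vec N" "?C3 *\<^sub>v z \<in> carrier_vec N" "?C4 *\<^sub>v v \<in> carrier_vec N"
    using Nvx C34 x v z by auto
  have "v = ?Nvx *\<^sub>v x + (?C4 *\<^sub>v v + ?C3 *\<^sub>v z)"
    using v_eq[symmetric] Nvw D v z
    unfolding w_eq Dp_def[symmetric] Dm_def[symmetric] C by (simp add: mult_add_distrib_mat_vec)
  then have "v - ?C4 *\<^sub>v v = ?Nvx *\<^sub>v x + ?C3 *\<^sub>v z"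
    using diff_eq_of_eq_add[OF v vecs(1) vecs(3) vecs(2)] by blast
  moreover have "(1\<^sub>m N - ?C4) *\<^sub>v v = v - ?C4 *\<^sub>v v"
    using minus_mult_distrib_mat_vec[OF one_carrier_mat C34(2) v] v by simp
  ultimately have IC4v: "(1\<^sub>m N - ?C4) *\<^sub>v v = ?Nvx *\<^sub>v x + ?C3 *\<^sub>v z" by simp
  have "v = (M * (1\<^sub>m N - ?C4)) *\<^sub>v v" using M v by simp
  also have "\<dots> = M *\<^sub>v ((1\<^sub>m N - ?C4) *\<^sub>v v)"
    by (rule assoc_mult_mat_vec) (use M C34 v in auto)
  also have "\<dots> = M *\<^sub>v (?Nvx *\<^sub>v x) + M *\<^sub>v (?C3 *\<^sub>v z)"
    unfolding IC4v by (rule mult_add_distrib_mat_vec) (use M vecs in auto)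
  finally show ?thesis
    unfolding tNvx_def tNvz_def M_def[symmetric]
    using assoc_mult_mat_vec[OF M(1) Nvx x] assoc_mult_mat_vec[OF M(1) C34(1) z] by simp
qed

lemma loop_transformation_output:
  fixes n :: "nat \<Rightarrow> nat" and W :: "nat \<Rightarrow> real mat" and l :: nat
  defines "N \<equiv> off n (Suc l)"
  assumes l: "1 \<le> l" and \<alpha>: "\<alpha> \<in> carrier_vec N" and \<beta>: "\<beta> \<in> carrier_vec N"
    and x: "x \<in> carrier_vec (n 0)" and z: "z \<in> carrier_vec N"
    and v_eq: "v = tNvx n W l \<alpha> \<beta> *\<^sub>v x + tNvz n W l \<alpha> \<beta> *\<^sub>v z"
    and w_eq: "w = diagv ((1/2) \<cdot>\<^sub>v (\<alpha> + \<beta>)) *\<^sub>v v + diagv ((1/2) \<cdot>\<^sub>v (\<beta> - \<alpha>)) *\<^sub>v z"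
  shows "Nuw n W l *\<^sub>v w = tNux n W l \<alpha> \<beta> *\<^sub>v x + tNuz n W l \<alpha> \<beta> *\<^sub>v z"
proof -
  define M where "M = IC4inv n W l \<alpha> \<beta>"
  let ?C1 = "C1 n W l \<alpha> \<beta>" and ?C2 = "C2 n W l \<alpha> \<beta>"
  let ?vx = "tNvx n W l \<alpha> \<beta> *\<^sub>v x" and ?vz = "tNvz n W l \<alpha> \<beta> *\<^sub>v z"
  note tN = tN_carrier[where W = W, OF l \<alpha>[unfolded N_def] \<beta>[unfolded N_def], folded N_def]
  have D: "diagv ((1/2) \<cdot>\<^sub>v (\<alpha> + \<beta>)) \<in> carrier_mat N N" "diagv ((1/2) \<cdot>\<^sub>v (\<beta> - \<alpha>)) \<in> carrier_mat N N"
    using \<alpha> \<beta> diagv_carrier by (metis carrier_vecD index_add_vec(2)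
        index_minus_vec(2) index_smult_vec(2))+
  have Nuw: "Nuw n W l \<in> carrier_mat (n (Suc l)) N" unfolding N_def by (rule Nuw_carrier)
  have C12: "?C1 \<in> carrier_mat (n (Suc l)) N" "?C2 \<in> carrier_mat (n (Suc l)) N"
    using C_eq_mult_diagv(1,2)[of \<alpha> \<beta>] \<alpha> \<beta> Nuw D by auto
  obtain i where i: "l = Suc i" using l by (cases l) auto
  have C3: "C3 n W l \<alpha> \<beta> \<in> carrier_mat N N"
    using C_eq_mult_diagv(3)[of \<alpha> \<beta>] \<alpha> \<beta> Nvw_carrier[of n W i] D unfolding N_def i by auto
  have M: "M \<in> carrier_mat N N"
    using IC4inv_left_inverse(1)[OF l \<alpha>[unfolded N_def] \<beta>[unfolded N_def]] unfolding M_def N_def .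
  have vecs: "?vx \<in> carrier_vec N" "?vz \<in> carrier_vec N" "v \<in> carrier_vec N"
    using tN x z v_eq by auto
  have "tNux n W l \<alpha> \<beta> *\<^sub>v x = 0\<^sub>m (n (Suc l)) (n 0) *\<^sub>v x + (?C2 * M * Nvx n W l) *\<^sub>v x"
    unfolding tNux_def Nux_def M_def[symmetric]
    by (rule add_mult_distrib_mat_vec) (use C12 M Nvx_carrier[of n W l] x in \<open>auto simp: N_def\<close>)
  also have "(?C2 * M * Nvx n W l) *\<^sub>v x = ?C2 *\<^sub>v ?vx"
    unfolding tNvx_def M_def[symmetric]
    using mult_mat_mat_mult_vec[OF C12(2) M Nvx_carrier[of n W l, folded N_def] x]
      assoc_mult_mat_vec[OF M Nvx_carrier[of n W l, folded N_def] x] by simp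
  finally have ux: "tNux n W l \<alpha> \<beta> *\<^sub>v x = 0\<^sub>v (n (Suc l)) + ?C2 *\<^sub>v ?vx" using x by simp
  have "tNuz n W l \<alpha> \<beta> *\<^sub>v z = ?C1 *\<^sub>v z + (?C2 * M * C3 n W l \<alpha> \<beta>) *\<^sub>v z"
    unfolding tNuz_def M_def[symmetric]
    by (rule add_mult_distrib_mat_vec) (use C12 C3 M z in auto)
  also have "(?C2 * M * C3 n W l \<alpha> \<beta>) *\<^sub>v z = ?C2 *\<^sub>v ?vz"
    unfolding tNvz_def M_def[symmetric]
    using mult_mat_mat_mult_vec[OF C12(2) M C3 z] assoc_mult_mat_vec[OF M C3 z] by simp
  finally have uz: "tNuz n W l \<alpha> \<beta> *\<^sub>v z = ?C1 *\<^sub>v z + ?C2 *\<^sub>v ?vz" .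
  have "Nuw n W l *\<^sub>v w = ?C2 *\<^sub>v v + ?C1 *\<^sub>v z"
    using Nuw D vecs z C_eq_mult_diagv(1,2)[of \<alpha> \<beta>] \<alpha> \<beta> unfolding w_eq
    by (simp add: mult_add_distrib_mat_vec)
  also have "\<dots> = (?C2 *\<^sub>v ?vx + ?C2 *\<^sub>v ?vz) + ?C1 *\<^sub>v z"
    unfolding v_eq using mult_add_distrib_mat_vec[OF C12(2) vecs(1,2)] by simp
  also have "\<dots> = tNux n W l \<alpha> \<beta> *\<^sub>v x + tNuz n W l \<alpha> \<beta> *\<^sub>v z"
    unfolding ux uz using C12 vecs z by (intro eq_vecI) auto
  finally show ?thesis .
qed

section \<open>Lyapunov decrease from the LMI\<close>

lemma lmi_lhs_quad_form:
  fixes n :: "nat \<Rightarrow> nat" and W :: "nat \<Rightarrow> real mat" and l :: nat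
  defines "N \<equiv> off n (Suc l)"
  assumes l: "1 \<le> l" and n0: "n 0 = nG" and nl: "n (Suc l) = nu"
    and AG: "AG \<in> carrier_mat nG nG" and BG: "BG \<in> carrier_mat nG nu" and P: "P \<in> carrier_mat nG nG"
    and \<alpha>: "\<alpha> \<in> carrier_vec N" and \<beta>: "\<beta> \<in> carrier_vec N" and lam: "lam \<in> carrier_vec N"
    and x: "x \<in> carrier_vec nG" and z: "z \<in> carrier_vec N"
    and u: "u \<in> carrier_vec nu" and v: "v \<in> carrier_vec N"
    and RV: "tRV n W l \<alpha> \<beta> *\<^sub>v (x @\<^sub>v z) = x @\<^sub>v u"
    and Rphi: "tRphi n W l \<alpha> \<beta> *\<^sub>v (x @\<^sub>v z) = v @\<^sub>v z"
  shows "(x @\<^sub>v z) \<bullet> (lmi_lhs AG BG P n W l \<alpha> \<beta> lam *\<^sub>v (x @\<^sub>v z))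
       = ((AG *\<^sub>v x + BG *\<^sub>v u) \<bullet> (P *\<^sub>v (AG *\<^sub>v x + BG *\<^sub>v u)) - x \<bullet> (P *\<^sub>v x))
         + (\<Sum>i<N. lam $ i * ((v $ i)\<^sup>2 - (z $ i)\<^sup>2))"
proof -
  define y where "y = x @\<^sub>v z"
  define Mp where "Mp = four_block_mat (AG\<^sup>T * P * AG - P) (AG\<^sup>T * P * BG) (BG\<^sup>T * P * AG) (BG\<^sup>T * P * BG)"
  define Ml where "Ml = four_block_mat (diagv lam) (0\<^sub>m (dim_vec lam) (dim_vec lam))
                          (0\<^sub>m (dim_vec lam) (dim_vec lam)) (- diagv lam)"
  have y: "y \<in> carrier_vec (nG + N)" unfolding y_def using x z by simp
  have RVc: "tRV n W l \<alpha> \<beta> \<in> carrier_mat (nG + nu) (nG + N)"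
    and Rphic: "tRphi n W l \<alpha> \<beta> \<in> carrier_mat (N + N) (nG + N)"
    using tR_carrier[OF l] \<alpha> \<beta> n0 nl unfolding N_def by auto
  have Mpc: "Mp \<in> carrier_mat (nG + nu) (nG + nu)" unfolding Mp_def using AG BG P by auto
  have Mlc: "Ml \<in> carrier_mat (N + N) (N + N)" unfolding Ml_def using lam by (auto simp: diagv_def)
  have QV: "(tRV n W l \<alpha> \<beta>)\<^sup>T * Mp * tRV n W l \<alpha> \<beta> \<in> carrier_mat (nG + N) (nG + N)"
    and Qphi: "(tRphi n W l \<alpha> \<beta>)\<^sup>T * Ml * tRphi n W l \<alpha> \<beta> \<in> carrier_mat (nG + N) (nG + N)"
    using RVc Rphic Mpc Mlc by auto
  have "y \<bullet> (lmi_lhs AG BG P n W l \<alpha> \<beta> lam *\<^sub>v y)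
      = y \<bullet> (((tRV n W l \<alpha> \<beta>)\<^sup>T * Mp * tRV n W l \<alpha> \<beta>) *\<^sub>v y)
        + y \<bullet> (((tRphi n W l \<alpha> \<beta>)\<^sup>T * Ml * tRphi n W l \<alpha> \<beta>) *\<^sub>v y)"
    unfolding lmi_lhs_def Mp_def[symmetric] Ml_def[symmetric] add_mult_distrib_mat_vec[OF QV Qphi y]
    using QV Qphi y by (intro scalar_prod_add_distrib) auto
  also have "\<dots> = (x @\<^sub>v u) \<bullet> (Mp *\<^sub>v (x @\<^sub>v u)) + (v @\<^sub>v z) \<bullet> (Ml *\<^sub>v (v @\<^sub>v z))"
    unfolding scalar_prod_transpose_mult_mult[OF RVc Mpc RVc y y]
      scalar_prod_transpose_mult_mult[OF Rphic Mlc Rphic y y]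
    unfolding y_def RV Rphi ..
  also have "\<dots> = ((AG *\<^sub>v x + BG *\<^sub>v u) \<bullet> (P *\<^sub>v (AG *\<^sub>v x + BG *\<^sub>v u)) - x \<bullet> (P *\<^sub>v x))
      + (\<Sum>i<N. lam $ i * ((v $ i)\<^sup>2 - (z $ i)\<^sup>2))"
    unfolding Mp_def Ml_def
    using plant_block_quad_form[OF AG BG P x u] multiplier_block_quad_form[of v lam z] v z lam by simp
  finally show ?thesis unfolding y_def .
qed

lemma lmi_lyapunov_decrease:
  fixes n :: "nat \<Rightarrow> nat" and W :: "nat \<Rightarrow> real mat" and l :: nat
    and \<phi> :: "real \<Rightarrow> real" and x :: "real vec"
  defines "N \<equiv> off n (Suc l)" and "v \<equiv> stackv (layer_v \<phi> W x) l"
  assumes l: "1 \<le> l" and n0: "n 0 = nG" and nl: "n (Suc l) = nu"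
    and W: "\<forall>i\<in>{1..Suc l}. W i \<in> carrier_mat (n i) (n (i - 1))"
    and AG: "AG \<in> carrier_mat nG nG" and BG: "BG \<in> carrier_mat nG nu" and P: "P \<in> carrier_mat nG nG"
    and \<alpha>: "\<alpha> \<in> carrier_vec N" and \<beta>: "\<beta> \<in> carrier_vec N" and \<alpha>\<beta>: "\<forall>i<N. \<alpha> $ i \<le> \<beta> $ i"
    and lam: "lam \<in> carrier_vec N" and lam0: "\<forall>i<N. 0 \<le> lam $ i"
    and e: "0 \<le> e"
    and LMI: "\<forall>y\<in>carrier_vec (nG + N). y \<bullet> (lmi_lhs AG BG P n W l \<alpha> \<beta> lam *\<^sub>v y) \<le> - e * (y \<bullet> y)"
    and x: "x \<in> carrier_vec nG"
    and sector: "\<forall>i<N. 0 \<le> (\<phi> (v $ i) - \<alpha> $ i * v $ i) * (\<beta> $ i * v $ i - \<phi> (v $ i))"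
  shows "(AG *\<^sub>v x + BG *\<^sub>v nn_ctrl \<phi> W l x) \<bullet> (P *\<^sub>v (AG *\<^sub>v x + BG *\<^sub>v nn_ctrl \<phi> W l x))
         \<le> x \<bullet> (P *\<^sub>v x) - e * (x \<bullet> x)"
proof -
  define w where "w = stackv (layer_w \<phi> W x) l"
  define u where "u = nn_ctrl \<phi> W l x"
  have x0: "x \<in> carrier_vec (n 0)" using x n0 by simp
  have Wl: "\<forall>j\<in>{1..l}. W j \<in> carrier_mat (n j) (n (j - 1))" using W by auto
  have v: "v \<in> carrier_vec N"
    unfolding v_def N_def using x0 Wl by (auto intro!: stackv_carrier layer_v_carrier)
  have w_v: "w = map_vec \<phi> v" unfolding w_def v_def by (rule stackv_layer_w)
  then have w: "w \<in> carrier_vec N" using v by simp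
  obtain z where z: "z \<in> carrier_vec N"
    and w_eq: "w = diagv ((1/2) \<cdot>\<^sub>v (\<alpha> + \<beta>)) *\<^sub>v v + diagv ((1/2) \<cdot>\<^sub>v (\<beta> - \<alpha>)) *\<^sub>v z"
    and zv: "\<forall>i<N. (z $ i)\<^sup>2 \<le> (v $ i)\<^sup>2"
    using sector_vec_midpoint_form[OF \<alpha> \<beta> v w \<alpha>\<beta>] sector w_v v by auto
  note carriers = \<alpha>[unfolded N_def] \<beta>[unfolded N_def] x0 v[unfolded N_def] z[unfolded N_def]
  have "Nvx n W l *\<^sub>v x + Nvw n W l *\<^sub>v w = v"
    unfolding v_def w_def by (rule network_preactivation_lfr[OF l x0 Wl])
  from loop_transformation_preactivation[OF l carriers this w_eq]
  have v_tN: "v = tNvx n W l \<alpha> \<beta> *\<^sub>v x + tNvz n W l \<alpha> \<beta> *\<^sub>v z" .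
  have "u = tNux n W l \<alpha> \<beta> *\<^sub>v x + tNuz n W l \<alpha> \<beta> *\<^sub>v z"
    using network_output_lfr[OF l x0 W]
      loop_transformation_output[OF l carriers(1-3,5) v_tN w_eq]
    unfolding u_def w_def by simp
  then have RV: "tRV n W l \<alpha> \<beta> *\<^sub>v (x @\<^sub>v z) = x @\<^sub>v u"
    and Rphi: "tRphi n W l \<alpha> \<beta> *\<^sub>v (x @\<^sub>v z) = v @\<^sub>v z"
    using tR_mult_vec[OF l carriers(1-3,5)] v_tN by auto
  have u: "u \<in> carrier_vec nu"
    using network_output_lfr[OF l x0 W] Nuw_carrier[of n W l] w nl unfolding u_def w_def N_def
    by (metis mult_mat_vec_carrier)
  have "x \<bullet> x \<le> (x @\<^sub>v z) \<bullet> (x @\<^sub>v z)"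
    using scalar_prod_append[OF x z x z] scalar_prod_self_nonneg[of z] by simp
  then have "- e * ((x @\<^sub>v z) \<bullet> (x @\<^sub>v z)) \<le> - e * (x \<bullet> x)" using e by (simp add: mult_left_mono)
  moreover have "0 \<le> (\<Sum>i<N. lam $ i * ((v $ i)\<^sup>2 - (z $ i)\<^sup>2))"
    using lam0 zv by (intro sum_nonneg mult_nonneg_nonneg) auto
  moreover have "x @\<^sub>v z \<in> carrier_vec (nG + N)" using x z by simp
  ultimately show ?thesis
    using LMI lmi_lhs_quad_form[OF l n0 nl AG BG P \<alpha>[unfolded N_def] \<beta>[unfolded N_def]
        lam[unfolded N_def] x z[unfolded N_def] u v[unfolded N_def] RV Rphi]
    unfolding u_def N_def by fastforce
qed

section \<open>Quadratic Lyapunov functions\<close>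

lemma traj_carrier:
  assumes "BG \<in> carrier_mat nG nu" and "x0 \<in> carrier_vec nG"
  shows "traj AG BG \<pi> x0 k \<in> carrier_vec nG"
  using assms by (induction k) (auto intro!: carrier_vecI)

context
  fixes nG nu :: nat and AG BG :: "real mat" and \<pi> :: "real vec \<Rightarrow> real vec"
    and V :: "real vec \<Rightarrow> real" and e :: real
  assumes BG: "BG \<in> carrier_mat nG nu"
    and V_nonneg: "\<And>x. x \<in> carrier_vec nG \<Longrightarrow> 0 \<le> V x"
    and decrease: "\<And>x. x \<in> carrier_vec nG \<Longrightarrow> V x \<le> 1 \<Longrightarrow>
                     V (AG *\<^sub>v x + BG *\<^sub>v \<pi> x) \<le> V x - e * (x \<bullet> x)"
    and e: "0 < e"
begin

lemma lyapunov_energy_bound: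
  assumes x0: "x0 \<in> carrier_vec nG" and "V x0 \<le> 1"
  shows "V (traj AG BG \<pi> x0 k) + e * (\<Sum>j<k. traj AG BG \<pi> x0 j \<bullet> traj AG BG \<pi> x0 j) \<le> V x0"
proof (induction k)
  case (Suc k)
  let ?x = "traj AG BG \<pi> x0"
  have x: "?x k \<in> carrier_vec nG" using traj_carrier[OF BG x0] .
  have "0 \<le> e * (\<Sum>j<k. ?x j \<bullet> ?x j)"
    using e by (simp add: sum_nonneg scalar_prod_self_nonneg)
  then have "V (?x k) \<le> 1" using Suc.IH assms(2) by linarith
  then have "V (?x (Suc k)) \<le> V (?x k) - e * (?x k \<bullet> ?x k)" using decrease[OF x] by simp
  then show ?case using Suc.IH by (simp add: algebra_simps)
qed simp

lemma lyapunov_traj_bound: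
  assumes x0: "x0 \<in> carrier_vec nG" and "V x0 \<le> 1"
  shows "e * (traj AG BG \<pi> x0 k \<bullet> traj AG BG \<pi> x0 k) \<le> V x0"
proof -
  let ?x = "traj AG BG \<pi> x0"
  have "?x k \<bullet> ?x k \<le> (\<Sum>j<Suc k. ?x j \<bullet> ?x j)"
    by (rule member_le_sum) (auto simp: scalar_prod_self_nonneg)
  then have "e * (?x k \<bullet> ?x k) \<le> e * (\<Sum>j<Suc k. ?x j \<bullet> ?x j)" using e by simp
  moreover have "0 \<le> V (?x (Suc k))" using V_nonneg traj_carrier[OF BG x0] by blast
  ultimately show ?thesis using lyapunov_energy_bound[OF assms, of "Suc k"] by linarith
qed

lemma lyapunov_traj_tendsto_zero:
  assumes x0: "x0 \<in> carrier_vec nG" and "V x0 \<le> 1"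
  shows "(\<lambda>k. vnorm (traj AG BG \<pi> x0 k)) \<longlonglongrightarrow> 0"
proof -
  let ?x = "traj AG BG \<pi> x0"
  have "(\<Sum>j<k. ?x j \<bullet> ?x j) \<le> V x0 / e" for k
  proof -
    have "0 \<le> V (?x k)" using V_nonneg traj_carrier[OF BG x0] by blast
    then have "e * (\<Sum>j<k. ?x j \<bullet> ?x j) \<le> V x0" using lyapunov_energy_bound[OF assms, of k] by linarith
    then show ?thesis using e by (simp add: pos_le_divide_eq mult.commute)
  qed
  then have "summable (\<lambda>k. ?x k \<bullet> ?x k)"
    by (intro summableI_nonneg_bounded) (auto simp: scalar_prod_self_nonneg)
  then have "(\<lambda>k. ?x k \<bullet> ?x k) \<longlonglongrightarrow> 0" by (rule summable_LIMSEQ_zero)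
  then show ?thesis unfolding vnorm_def using tendsto_real_sqrt by fastforce
qed

lemma lyapunov_loc_asym_stable:
  assumes C: "0 \<le> C" and V_le: "\<And>x. x \<in> carrier_vec nG \<Longrightarrow> V x \<le> C * (x \<bullet> x)"
  shows "loc_asym_stable nG AG BG \<pi>"
proof -
  have small: "V x0 < m" if x0: "x0 \<in> carrier_vec nG" "vnorm x0 < sqrt (m / (C + 1))" "0 < m" for x0 m
  proof -
    have "x0 \<bullet> x0 < m / (C + 1)"
      using x0(2) scalar_prod_self_nonneg[of x0] unfolding vnorm_def by (simp add: real_sqrt_less_iff)
    then have "(C + 1) * (x0 \<bullet> x0) < m" using C by (simp add: field_simps)
    moreover have "V x0 \<le> (C + 1) * (x0 \<bullet> x0)"
      using V_le[OF x0(1)] scalar_prod_self_nonneg[of x0] by (simp add: algebra_simps)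
    ultimately show ?thesis by linarith
  qed
  have "\<exists>\<delta>>0. \<forall>x0\<in>carrier_vec nG. vnorm x0 < \<delta> \<longrightarrow> (\<forall>k. vnorm (traj AG BG \<pi> x0 k) < \<epsilon>)"
    if "\<epsilon> > 0" for \<epsilon>
  proof (intro exI[of _ "sqrt (min 1 (e * \<epsilon>\<^sup>2) / (C + 1))"] conjI ballI impI allI)
    show "0 < sqrt (min 1 (e * \<epsilon>\<^sup>2) / (C + 1))" using e C \<open>\<epsilon> > 0\<close> by simp
    fix x0 k
    assume "x0 \<in> carrier_vec nG" "vnorm x0 < sqrt (min 1 (e * \<epsilon>\<^sup>2) / (C + 1))"
    then have x0: "x0 \<in> carrier_vec nG" "V x0 < 1" "V x0 < e * \<epsilon>\<^sup>2"
      using small[of x0 "min 1 (e * \<epsilon>\<^sup>2)"] e \<open>\<epsilon> > 0\<close> by auto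
    then have "e * (traj AG BG \<pi> x0 k \<bullet> traj AG BG \<pi> x0 k) < e * \<epsilon>\<^sup>2"
      using lyapunov_traj_bound[of x0 k] by simp
    then have "traj AG BG \<pi> x0 k \<bullet> traj AG BG \<pi> x0 k < \<epsilon>\<^sup>2" using e by simp
    then show "vnorm (traj AG BG \<pi> x0 k) < \<epsilon>"
      unfolding vnorm_def using \<open>\<epsilon> > 0\<close> real_sqrt_less_iff[of _ "\<epsilon>\<^sup>2"] by simp
  qed
  moreover have "\<exists>\<delta>>0. \<forall>x0\<in>carrier_vec nG. vnorm x0 < \<delta> \<longrightarrow> (\<lambda>k. vnorm (traj AG BG \<pi> x0 k)) \<longlonglongrightarrow> 0"
    using small[of _ 1] C lyapunov_traj_tendsto_zero
    by (intro exI[of _ "sqrt (1 / (C + 1))"]) (auto intro: less_imp_le)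
  ultimately show ?thesis unfolding loc_asym_stable_def by blast
qed

end

theorem lemma2:
  fixes nG nu nX l :: nat and n :: "nat \<Rightarrow> nat" and W :: "nat \<Rightarrow> real mat"
    and \<phi> :: "real \<Rightarrow> real" and AG BG H P :: "real mat"
    and h vlo vup \<alpha> \<beta> lam :: "real vec"
  defines "n\<phi> \<equiv> off n (Suc l)"
  assumes l: "l \<ge> 1"
    and n0: "n 0 = nG" and nl: "n (Suc l) = nu"
    and W: "\<forall>i\<in>{1..Suc l}. W i \<in> carrier_mat (n i) (n (i - 1))"
    and phi0: "\<phi> 0 = 0"
    and AG: "AG \<in> carrier_mat nG nG" and BG: "BG \<in> carrier_mat nG nu"
    and H: "H \<in> carrier_mat nX nG" and h: "h \<in> carrier_vec nX" and h0: "\<forall>i<nX. h $ i \<ge> 0"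
    and vlo: "vlo \<in> carrier_vec n\<phi>" and vup: "vup \<in> carrier_vec n\<phi>"
    and vle: "\<forall>i<n\<phi>. vlo $ i \<le> vup $ i"
    and vbound: "\<forall>x\<in>polyX nG H h. \<forall>i<n\<phi>.
        vlo $ i \<le> stackv (layer_v \<phi> W x) l $ i \<and> stackv (layer_v \<phi> W x) l $ i \<le> vup $ i"
    and \<alpha>: "\<alpha> \<in> carrier_vec n\<phi>" and \<beta>: "\<beta> \<in> carrier_vec n\<phi>"
    and \<alpha>\<beta>: "\<forall>i<n\<phi>. \<alpha> $ i \<le> \<beta> $ i"
    and sector: "\<forall>i<n\<phi>. \<forall>\<nu>. vlo $ i \<le> \<nu> \<and> \<nu> \<le> vup $ i \<longrightarrow>
                   (\<phi> \<nu> - \<alpha> $ i * \<nu>) * (\<beta> $ i * \<nu> - \<phi> \<nu>) \<ge> 0"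
    and P: "pos_def nG P"
    and lam: "lam \<in> carrier_vec n\<phi>" and lam0: "\<forall>i<n\<phi>. lam $ i \<ge> 0"
    and LMI: "neg_def (nG + n\<phi>) (lmi_lhs AG BG P n W l \<alpha> \<beta> lam)"
    and LMI2: "\<forall>i<nX. psd (Suc nG)
        (four_block_mat (mat 1 1 (\<lambda>_. (h $ i)\<^sup>2)) (mat_of_row (row H i))
                        ((mat_of_row (row H i))\<^sup>T) P)"
  shows "loc_asym_stable nG AG BG (nn_ctrl \<phi> W l) \<and>
         ellipsoid nG P \<subseteq> roa nG AG BG (nn_ctrl \<phi> W l) H h"
proof -
  define V where "V x = x \<bullet> (P *\<^sub>v x)" for x
  have Pc: "P \<in> carrier_mat nG nG" using P unfolding pos_def_def by simp
  obtain e where e: "e > 0" "\<forall>y\<in>carrier_vec (nG + n\<phi>). y \<bullet> (lmi_lhs AG BG P n W l \<alpha> \<beta> lam *\<^sub>v y) \<le> - e * (y \<bullet> y)"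
    using neg_def_coercive[OF LMI] by blast
  obtain C where C: "C \<ge> 0" "\<forall>x\<in>carrier_vec nG. V x \<le> C * (x \<bullet> x)"
    using quad_mat_upper_bound[OF Pc] unfolding V_def by blast
  have X: "ellipsoid nG P \<subseteq> polyX nG H h" by (rule ellipsoid_subset_polyX[OF H h h0 Pc LMI2])
  have decrease: "V (AG *\<^sub>v x + BG *\<^sub>v nn_ctrl \<phi> W l x) \<le> V x - e * (x \<bullet> x)"
    if x: "x \<in> carrier_vec nG" and "V x \<le> 1" for x
  proof -
    have "x \<in> polyX nG H h" using X x \<open>V x \<le> 1\<close> unfolding ellipsoid_def V_def by auto
    then show ?thesis
      unfolding V_def using vbound sector
      by (intro lmi_lyapunov_decrease[OF l n0 nl W AG BG Pc \<alpha>[unfolded n\<phi>_def] \<beta>[unfolded n\<phi>_def]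
            \<alpha>\<beta>[unfolded n\<phi>_def] lam[unfolded n\<phi>_def] lam0[unfolded n\<phi>_def] _ e(2)[unfolded n\<phi>_def] x])
        (auto simp: n\<phi>_def e(1) less_imp_le)
  qed
  have V_nonneg: "0 \<le> V x" if "x \<in> carrier_vec nG" for x
    unfolding V_def by (rule pos_def_nonneg[OF P that])
  have "loc_asym_stable nG AG BG (nn_ctrl \<phi> W l)"
    using lyapunov_loc_asym_stable[OF BG V_nonneg decrease e(1) C(1)] C(2) by blast
  moreover have "ellipsoid nG P \<subseteq> roa nG AG BG (nn_ctrl \<phi> W l) H h"
    using X lyapunov_traj_tendsto_zero[OF BG V_nonneg decrease e(1)]
    unfolding roa_def ellipsoid_def V_def by auto
  ultimately show ?thesis ..
qed

end
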